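(* For every $d,k,N\in\mathbb{N}$ (positive integers), the barycenter map $\mathsf{bary}:\mathcal{G}_{d,k}^N\to\mathcal{G}_{d,k}$ is an epimorphism (surjective morphism) of real affine algebraic varieties. Moreover, if $N-1$ of the $N$ sample elements are fixed arbitrarily, then the resulting map $\mathcal{G}_{d,k}\to\mathcal{G}_{d,k}$ (in the remaining sample element) is an isomorphism of algebraic varieties.
   Context: Let $T_{d,k}=\bigoplus_{\ell=0}^k(\mathbb{R}^d)^{\otimes \ell}$ be the truncated tensor algebra; write its elements as $\mathbf{z}=\mathbf{z}^{(0)}\oplus\cdots\oplus\mathbf{z}^{(k)}$ with $\mathbf{z}^{(\ell)}\in(\mathbb{R}^d)^{\otimes\ell}$. The product is the bilinear extension of $(\mathbf{a}\otimes\mathbf{b})_{i_1\dots i_{\ell+n}}=\mathbf{a}_{i_1\dots i_\ell}\mathbf{b}_{i_{\ell+1}\dots i_{\ell+n}}$ for $\mathbf{a}\in(\mathbb{R}^d)^{\otimes\ell},\mathbf{b}\in(\mathbb{R}^d)^{\otimes n}$ when $\ell+n\le k$, and $0$ when $\ell+n>k$; the unit is $1\in(\mathbb{R}^d)^{\otimes 0}=\mathbb{R}$. Let $\mathfrak{g}_{d,k}$ be the smallest Lie subalgebra of $T_{d,k}$ (bracket $[\mathbf{y},\mathbf{z}]=\mathbf{y}\otimes\mathbf{z}-\mathbf{z}\otimes\mathbf{y}$) containing the standard basis vectors $e_1,\dots,e_d\in\mathbb{R}^d$ (in level $1$). Let $\exp(\mathbf{z})=\sum_{\ell=0}^k\frac{1}{\ell!}\mathbf{z}^{\otimes\ell}$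 and $\mathcal{G}_{d,k}=\exp(\mathfrak{g}_{d,k})$, a group under the product of $T_{d,k}$ (the free nilpotent Lie group); $\exp:\mathfrak{g}_{d,k}\to\mathcal{G}_{d,k}$ is bijective with inverse $\log(\mathbf{s})=\sum_{\ell\ge1}\frac{(-1)^{\ell+1}}{\ell}(\mathbf{s}-1)^{\otimes\ell}$ (a finite sum). $\mathfrak{g}_{d,k}$ and $\mathcal{G}_{d,k}$ are regarded as real affine algebraic subvarieties of $T_{d,k}\cong\mathbb{R}^{(d^{k+1}-1)/(d-1)}$. For a sample $\mathbf{x}=(\mathbf{x}_1,\dots,\mathbf{x}_N)\in\mathcal{G}_{d,k}^N$, its barycenter $\mathsf{bary}(\mathbf{x})$ is the unique $\mathbf{m}\in\mathcal{G}_{d,k}$ satisfying $\sum_{i=1}^N\log(\mathbf{m}^{-1}\cdot\mathbf{x}_i)=0$ (existence and uniqueness are known). *)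

theory Defs
  imports Main "HOL-Library.FuncSet" Complex_Main
begin

text \<open>Elements of the truncated tensor algebra T_{d,k} are represented as coefficient
  functions on words: z w is the coefficient of e_{w_1} \<otimes> ... \<otimes> e_{w_l}.
  The ambient coordinates of T_{d,k} are the words over {0..<d} of length at most k.\<close>

type_synonym tensor = "nat list \<Rightarrow> real"

definition tensors :: "nat \<Rightarrow> nat \<Rightarrow> tensor set" where
  "tensors d k = {z. \<forall>w. z w \<noteq> 0 \<longrightarrow> length w \<le> k \<and> set w \<subseteq> {..<d}}"

definition tzero :: tensor where "tzero = (\<lambda>w. 0)"
definition tone :: tensor where "tone = (\<lambda>w. if w = [] then 1 else 0)"
definition tadd :: "tensor \<Rightarrow> tensor \<Rightarrow> tensor" where "tadd a b = (\<lambda>w. a w + b w)"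
definition tsub :: "tensor \<Rightarrow> tensor \<Rightarrow> tensor" where "tsub a b = (\<lambda>w. a w - b w)"
definition tscale :: "real \<Rightarrow> tensor \<Rightarrow> tensor" where "tscale c a = (\<lambda>w. c * a w)"

definition tmul :: "nat \<Rightarrow> tensor \<Rightarrow> tensor \<Rightarrow> tensor" where
  "tmul k a b = (\<lambda>w. if length w \<le> k
                      then (\<Sum>i\<le>length w. a (take i w) * b (drop i w)) else 0)"

primrec tpow :: "nat \<Rightarrow> tensor \<Rightarrow> nat \<Rightarrow> tensor" where
  "tpow k z 0 = tone"
| "tpow k z (Suc n) = tmul k z (tpow k z n)"

definition texp :: "nat \<Rightarrow> tensor \<Rightarrow> tensor" where
  "texp k z = (\<lambda>w. \<Sum>l\<le>k. (1 / fact l) * tpow k z l w)"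

definition tlog :: "nat \<Rightarrow> tensor \<Rightarrow> tensor" where
  "tlog k s = (\<lambda>w. \<Sum>l\<in>{1..k}. ((-1) ^ (l + 1) / real l) * tpow k (tsub s tone) l w)"

text \<open>Group inverse (Neumann series, exact for elements with scalar part 1).\<close>
definition tinv :: "nat \<Rightarrow> tensor \<Rightarrow> tensor" where
  "tinv k m = (\<lambda>w. \<Sum>l\<le>k. tpow k (tsub tone m) l w)"

definition tbracket :: "nat \<Rightarrow> tensor \<Rightarrow> tensor \<Rightarrow> tensor" where
  "tbracket k y z = tsub (tmul k y z) (tmul k z y)"

definition basis_vec :: "nat \<Rightarrow> tensor" where
  "basis_vec i = (\<lambda>w. if w = [i] then 1 else 0)"

inductive_set lie_alg :: "nat \<Rightarrow> nat \<Rightarrow> tensor set" for d k where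
  gen: "i < d \<Longrightarrow> basis_vec i \<in> lie_alg d k"
| zero: "tzero \<in> lie_alg d k"
| add: "a \<in> lie_alg d k \<Longrightarrow> b \<in> lie_alg d k \<Longrightarrow> tadd a b \<in> lie_alg d k"
| scale: "a \<in> lie_alg d k \<Longrightarrow> tscale c a \<in> lie_alg d k"
| bracket: "a \<in> lie_alg d k \<Longrightarrow> b \<in> lie_alg d k \<Longrightarrow> tbracket k a b \<in> lie_alg d k"

definition grp :: "nat \<Rightarrow> nat \<Rightarrow> tensor set" where
  "grp d k = texp k ` lie_alg d k"

text \<open>Samples of size N: coordinates (i,w), i < N the sample index; unused coordinates are 0.\<close>
definition sample_comp :: "(nat \<times> nat list \<Rightarrow> real) \<Rightarrow> nat \<Rightarrow> tensor" where
  "sample_comp x i = (\<lambda>w. x (i, w))"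

definition samples :: "nat \<Rightarrow> nat \<Rightarrow> nat \<Rightarrow> (nat \<times> nat list \<Rightarrow> real) set" where
  "samples d k N = {x. (\<forall>i<N. sample_comp x i \<in> grp d k) \<and> (\<forall>i w. N \<le> i \<longrightarrow> x (i, w) = 0)}"

definition sample_upd :: "(nat \<times> nat list \<Rightarrow> real) \<Rightarrow> nat \<Rightarrow> tensor \<Rightarrow> (nat \<times> nat list \<Rightarrow> real)" where
  "sample_upd x i y = (\<lambda>(j, w). if j = i then y w else x (j, w))"

definition bary :: "nat \<Rightarrow> nat \<Rightarrow> nat \<Rightarrow> (nat \<times> nat list \<Rightarrow> real) \<Rightarrow> tensor" where
  "bary d k N x = (THE m. m \<in> grp d k \<and>
      (\<lambda>w. \<Sum>i<N. tlog k (tmul k (tinv k m) (sample_comp x i)) w) = tzero)"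

inductive_set polyfun :: "(('v \<Rightarrow> real) \<Rightarrow> real) set" where
  const: "(\<lambda>x. c) \<in> polyfun"
| var: "(\<lambda>x. x v) \<in> polyfun"
| add: "p \<in> polyfun \<Longrightarrow> q \<in> polyfun \<Longrightarrow> (\<lambda>x. p x + q x) \<in> polyfun"
| mult: "p \<in> polyfun \<Longrightarrow> q \<in> polyfun \<Longrightarrow> (\<lambda>x. p x * q x) \<in> polyfun"

definition alg_morphism :: "('a \<Rightarrow> real) set \<Rightarrow> ('b \<Rightarrow> real) set \<Rightarrow> (('a \<Rightarrow> real) \<Rightarrow> ('b \<Rightarrow> real)) \<Rightarrow> bool" where
  "alg_morphism V W f \<longleftrightarrow> (\<forall>x\<in>V. f x \<in> W) \<and> (\<forall>b. \<exists>p\<in>polyfun. \<forall>x\<in>V. f x b = p x)"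

definition alg_iso :: "('a \<Rightarrow> real) set \<Rightarrow> ('b \<Rightarrow> real) set \<Rightarrow> (('a \<Rightarrow> real) \<Rightarrow> ('b \<Rightarrow> real)) \<Rightarrow> bool" where
  "alg_iso V W f \<longleftrightarrow> alg_morphism V W f \<and>
     (\<exists>g. alg_morphism W V g \<and> (\<forall>x\<in>V. g (f x) = x) \<and> (\<forall>y\<in>W. f (g y) = y))"

end

(* The barycenter m of x_1, ..., x_N is the zero of the residual F(m) = \<Sum>_i log(m\<inverse> x_i).
   Because the group is nilpotent of step k, moving m = exp \<mu> to exp(\<mu> + \<delta>) with \<delta>
   concentrated in levels \<ge> n changes F only by -N \<delta> up to level n. Hence the iteration
   \<mu> \<mapsto> \<mu> + F(exp \<mu>)/N started at 0 reaches the barycenter after k steps, and as a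
   composition of polynomial maps it shows that the barycenter is a polynomial function of the
   sample; the same perturbation argument gives uniqueness. A constant sample shows
   surjectivity. With all points but x_i0 fixed, the barycenter equation reads
   log(m\<inverse> x_i0) = -\<Sum>_{i \<noteq> i0} log(m\<inverse> x_i), which solves polynomially for x_i0.

   That exp(g) is closed under products and inverses, used throughout, is obtained by identifying
   g with the primitive and exp(g) with the group-like elements for the deshuffle coproduct;
   primitive elements are Lie by the Dynkin--Specht--Wever projection. *)

theory Submission
  imports Defs "HOL-Computational_Algebra.Formal_Power_Series" "HOL-Computational_Algebra.Polynomial"
begin

unbundle fps_syntax

lemma sum_if_eq_mult:
  "finite S \<Longrightarrow> (\<Sum>i\<in>S. (if i = a then (c::real) else 0) * f i) = (if a \<in> S then c * f a else 0)"
  by (simp add: if_distrib[of "\<lambda>x. x * _"] sum.delta' cong: if_cong)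

lemma sum_if_fst_0:
  "(\<Sum>i\<le>(p::nat). \<Sum>j\<le>(q::nat). if i = 0 then F i j else 0) = (\<Sum>j\<le>q. (F 0 j :: 'a::comm_monoid_add))"
  by (subst sum.swap) (simp add: sum.delta)

lemma sum_triangle_eq_sum_square:
  fixes H :: "nat \<Rightarrow> nat \<Rightarrow> 'a::comm_monoid_add"
  assumes "\<And>l m. l \<le> k \<Longrightarrow> m \<le> k \<Longrightarrow> k < l + m \<Longrightarrow> H l m = 0"
  shows "(\<Sum>n\<le>k. \<Sum>l\<le>n. H l (n - l)) = (\<Sum>l\<le>k. \<Sum>m\<le>k. H l m)"
proof -
  have "(\<Sum>n\<le>k. \<Sum>l\<le>n. H l (n - l)) = (\<Sum>(l,m)\<in>{(l,m). l + m \<le> k}. H l m)"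
    by (rule sum.triangle_reindex_eq[symmetric])
  also have "\<dots> = (\<Sum>(l,m)\<in>{..k} \<times> {..k}. H l m)"
    by (rule sum.mono_neutral_left) (auto simp: not_le intro!: assms)
  finally show ?thesis by (simp add: sum.cartesian_product)
qed

lemma sum_binomial_Suc_split:
  fixes f g :: "nat \<Rightarrow> real"
  shows "(\<Sum>l\<le>Suc n. real (Suc n choose l) * f l * g (Suc n - l)) =
         (\<Sum>l\<le>n. real (n choose l) * f l * g (Suc n - l)) + (\<Sum>l\<le>n. real (n choose l) * f (Suc l) * g (n - l))"
proof -
  define G where "G l = real (n choose l) * f l * g (Suc n - l)" for l
  have "(\<Sum>l\<le>Suc n. real (Suc n choose l) * f l * g (Suc n - l)) =
      f 0 * g (Suc n) + (\<Sum>l\<le>n. real (Suc n choose Suc l) * f (Suc l) * g (n - l))"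
    by (subst sum.atMost_Suc_shift) simp
  also have "\<dots> = f 0 * g (Suc n) + (\<Sum>l\<le>n. real (n choose Suc l) * f (Suc l) * g (n - l))
      + (\<Sum>l\<le>n. real (n choose l) * f (Suc l) * g (n - l))"
    by (simp add: sum.distrib algebra_simps)
  also have "f 0 * g (Suc n) + (\<Sum>l\<le>n. real (n choose Suc l) * f (Suc l) * g (n - l)) = (\<Sum>l\<le>Suc n. G l)"
    by (subst sum.atMost_Suc_shift) (simp add: G_def)
  also have "(\<Sum>l\<le>Suc n. G l) = (\<Sum>l\<le>n. G l)"
    by (simp add: G_def)
  finally show ?thesis by (simp add: G_def)
qed

lemma poly_eq_0_if_nat_roots:
  fixes P :: "real poly"
  assumes "\<And>n::nat. poly P (real n) = 0"
  shows "P = 0"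
proof (rule ccontr)
  assume "P \<noteq> 0"
  then have "finite {t. poly P t = 0}" by (rule poly_roots_finite)
  moreover have "range real \<subseteq> {t. poly P t = 0}" using assms by auto
  ultimately have "finite (range (real :: nat \<Rightarrow> real))" by (rule finite_subset[rotated])
  moreover have "infinite (range (real :: nat \<Rightarrow> real))"
    by (rule range_inj_infinite) (simp add: inj_on_def)
  ultimately show False by simp
qed

section \<open>Truncated tensor algebra\<close>

definition levels_le :: "nat \<Rightarrow> tensor \<Rightarrow> bool" where
  "levels_le k z \<longleftrightarrow> (\<forall>w. k < length w \<longrightarrow> z w = 0)"

definition levels_ge :: "nat \<Rightarrow> tensor \<Rightarrow> bool" where
  "levels_ge n z \<longleftrightarrow> (\<forall>w. length w < n \<longrightarrow> z w = 0)"

definition truncate :: "nat \<Rightarrow> tensor \<Rightarrow> tensor" where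
  "truncate k z = (\<lambda>w. if length w \<le> k then z w else 0)"

lemma tmul_apply: "length w \<le> k \<Longrightarrow> tmul k a b w = (\<Sum>i\<le>length w. a (take i w) * b (drop i w))"
  by (simp add: tmul_def)

lemma tmul_apply_long: "k < length w \<Longrightarrow> tmul k a b w = 0"
  by (simp add: tmul_def)

lemma levels_le_tmul[simp]: "levels_le k (tmul k a b)"
  by (simp add: levels_le_def tmul_def)

lemma levels_le_tone[simp]: "levels_le k tone"
  by (simp add: levels_le_def tone_def)

lemma levels_le_tpow[simp]: "levels_le k (tpow k z n)"
  by (cases n) auto

lemma truncate_levels_le[simp]: "levels_le k z \<Longrightarrow> truncate k z = z"
  by (auto simp: truncate_def levels_le_def fun_eq_iff)

lemma tmul_assoc: "tmul k (tmul k a b) c = tmul k a (tmul k b c)"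
proof (rule ext)
  fix w :: "nat list"
  show "tmul k (tmul k a b) c w = tmul k a (tmul k b c) w"
  proof (cases "length w \<le> k")
    case False then show ?thesis by (simp add: tmul_def)
  next
    case True
    define n where "n = length w"
    define f where "f j l = a (take j w) * b (take l (drop j w)) * c (drop l (drop j w))" for j l
    have "tmul k (tmul k a b) c w = (\<Sum>i\<le>n. \<Sum>j\<le>i. f j (i - j))"
      unfolding tmul_apply[OF True] n_def[symmetric] using True
      by (intro sum.cong[OF refl])
        (auto simp: n_def tmul_apply sum_distrib_right f_def min_def drop_take add.commute intro!: sum.cong)
    also have "\<dots> = (\<Sum>(j,l)\<in>{(j,l). j + l \<le> n}. f j l)"
      by (rule sum.triangle_reindex_eq[symmetric])
    also have "{(j,l). j + l \<le> n} = Sigma {..n} (\<lambda>j. {..n - j})"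
      by auto
    also have "(\<Sum>(j,l)\<in>Sigma {..n} (\<lambda>j. {..n - j}). f j l) = (\<Sum>j\<le>n. \<Sum>l\<le>n - j. f j l)"
      by (rule sum.Sigma[symmetric]) auto
    also have "\<dots> = tmul k a (tmul k b c) w"
      unfolding tmul_apply[OF True] n_def[symmetric] using True
      by (intro sum.cong[OF refl]) (auto simp: n_def tmul_apply sum_distrib_left f_def mult.assoc intro!: sum.cong)
    finally show ?thesis .
  qed
qed

lemma tmul_tone_left: "tmul k tone a = truncate k a"
proof (rule ext)
  fix w :: "nat list"
  show "tmul k tone a w = truncate k a w"
  proof (cases "length w \<le> k")
    case True
    have "tmul k tone a w = (\<Sum>i\<le>length w. if i = 0 then a w else 0)"
      unfolding tmul_apply[OF True] by (rule sum.cong) (auto simp: tone_def)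
    then show ?thesis using True by (simp add: truncate_def)
  qed (simp add: tmul_def truncate_def)
qed

lemma tmul_tone_right: "tmul k a tone = truncate k a"
proof (rule ext)
  fix w :: "nat list"
  show "tmul k a tone w = truncate k a w"
  proof (cases "length w \<le> k")
    case True
    have "tmul k a tone w = (\<Sum>i\<le>length w. if i = length w then a w else 0)"
      unfolding tmul_apply[OF True] by (rule sum.cong) (auto simp: tone_def)
    then show ?thesis using True by (simp add: truncate_def)
  qed (simp add: tmul_def truncate_def)
qed

lemma tmul_sum_sum:
  assumes "finite S" "finite T"
  shows "tmul k (\<lambda>w. \<Sum>i\<in>S. c i * A i w) (\<lambda>w. \<Sum>j\<in>T. e j * B j w)
       = (\<lambda>w. \<Sum>i\<in>S. \<Sum>j\<in>T. c i * e j * tmul k (A i) (B j) w)"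
proof (rule ext)
  fix w :: "nat list"
  show "tmul k (\<lambda>w. \<Sum>i\<in>S. c i * A i w) (\<lambda>w. \<Sum>j\<in>T. e j * B j w) w
       = (\<Sum>i\<in>S. \<Sum>j\<in>T. c i * e j * tmul k (A i) (B j) w)"
  proof (cases "length w \<le> k")
    case True
    have "(\<Sum>t\<le>length w. (\<Sum>i\<in>S. c i * A i (take t w)) * (\<Sum>j\<in>T. e j * B j (drop t w)))
        = (\<Sum>t\<le>length w. \<Sum>i\<in>S. \<Sum>j\<in>T. c i * e j * (A i (take t w) * B j (drop t w)))"
      by (rule sum.cong[OF refl]) (simp add: sum_product algebra_simps)
    also have "\<dots> = (\<Sum>i\<in>S. \<Sum>t\<le>length w. \<Sum>j\<in>T. c i * e j * (A i (take t w) * B j (drop t w)))"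
      by (rule sum.swap)
    also have "\<dots> = (\<Sum>i\<in>S. \<Sum>j\<in>T. \<Sum>t\<le>length w. c i * e j * (A i (take t w) * B j (drop t w)))"
      by (rule sum.cong[OF refl], rule sum.swap)
    finally show ?thesis
      unfolding tmul_apply[OF True] by (simp add: sum_distrib_left)
  qed (simp add: tmul_def)
qed

lemma tmul_add_left: "tmul k (\<lambda>w. a w + b w) c = (\<lambda>w. tmul k a c w + tmul k b c w)"
  by (auto simp: tmul_def fun_eq_iff algebra_simps sum.distrib)

lemma tmul_add_right: "tmul k c (\<lambda>w. a w + b w) = (\<lambda>w. tmul k c a w + tmul k c b w)"
  by (auto simp: tmul_def fun_eq_iff algebra_simps sum.distrib)

lemma tmul_diff_left: "tmul k (\<lambda>w. a w - b w) c = (\<lambda>w. tmul k a c w - tmul k b c w)"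
  by (auto simp: tmul_def fun_eq_iff algebra_simps sum_subtractf)

lemma tmul_scale_left: "tmul k (\<lambda>w. r * a w) c = (\<lambda>w. r * tmul k a c w)"
  by (auto simp: tmul_def fun_eq_iff algebra_simps sum_distrib_left)

lemma tmul_scale_right: "tmul k c (\<lambda>w. r * a w) = (\<lambda>w. r * tmul k c a w)"
  by (auto simp: tmul_def fun_eq_iff algebra_simps sum_distrib_left)

lemma tmul_zero_left: "tmul k (\<lambda>w. 0) c = (\<lambda>w. 0)"
  by (auto simp: tmul_def fun_eq_iff)

lemma tmul_zero_right: "tmul k c (\<lambda>w. 0) = (\<lambda>w. 0)"
  by (auto simp: tmul_def fun_eq_iff)

lemma tmul_sum_right: "finite S \<Longrightarrow> tmul k c (\<lambda>w. \<Sum>i\<in>S. f i w) = (\<lambda>w. \<Sum>i\<in>S. tmul k c (f i) w)"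
  by (induct S rule: finite_induct) (simp_all add: tmul_zero_right tmul_add_right)

lemma tpow_add: "tpow k z (m + n) = tmul k (tpow k z m) (tpow k z n)"
proof (induct m)
  case 0
  then show ?case by (simp add: tmul_tone_left)
next
  case (Suc m)
  then show ?case by (simp add: tmul_assoc)
qed

lemma tpow_one: "tpow k z 1 = truncate k z"
  by (simp add: tmul_tone_right)

lemma levels_ge_tmul: "levels_ge p a \<Longrightarrow> levels_ge q b \<Longrightarrow> levels_ge (p + q) (tmul k a b)"
  unfolding levels_ge_def
proof (intro allI impI)
  fix w :: "nat list"
  assume a: "\<forall>w. length w < p \<longrightarrow> a w = 0" and b: "\<forall>w. length w < q \<longrightarrow> b w = 0"
    and w: "length w < p + q"
  show "tmul k a b w = 0"
  proof (cases "length w \<le> k")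
    case True
    show ?thesis unfolding tmul_apply[OF True]
    proof (rule sum.neutral, rule ballI)
      fix i assume "i \<in> {..length w}"
      show "a (take i w) * b (drop i w) = 0"
      proof (cases "i < p")
        case True then show ?thesis using a by (simp add: min_def)
      next
        case False then show ?thesis using b w \<open>i \<in> {..length w}\<close> by simp
      qed
    qed
  qed (simp add: tmul_def)
qed

lemma levels_ge_mono: "levels_ge n z \<Longrightarrow> m \<le> n \<Longrightarrow> levels_ge m z"
  by (auto simp: levels_ge_def)

lemma levels_ge_0[simp]: "levels_ge 0 z"
  by (simp add: levels_ge_def)

lemma levels_ge_tpow: "levels_ge 1 z \<Longrightarrow> levels_ge n (tpow k z n)"
proof (induct n)
  case 0 then show ?case by simp
next
  case (Suc n)
  then show ?case using levels_ge_tmul[of 1 z n "tpow k z n" k] by simp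
qed

lemma tpow_apply_short: "levels_ge 1 a \<Longrightarrow> length w < l \<Longrightarrow> tpow k a l w = 0"
  using levels_ge_tpow[of a l k] by (simp add: levels_ge_def)

lemma tpow_nilpotent: "levels_ge 1 z \<Longrightarrow> k < n \<Longrightarrow> tpow k z n w = 0"
  using levels_le_tpow[of k z n] by (cases "length w < n") (auto simp: tpow_apply_short levels_le_def)

lemma levels_ge_Suc_0[simp]: "levels_ge (Suc 0) z \<longleftrightarrow> z [] = 0"
  by (auto simp: levels_ge_def)

section \<open>Power series evaluated at tensors\<close>

text \<open>Truncating f at degree k is harmless when z has no scalar part, since then z^i = 0 for
  i > k.\<close>
definition fps_eval :: "nat \<Rightarrow> tensor \<Rightarrow> real fps \<Rightarrow> tensor" where
  "fps_eval k z f = (\<lambda>w. \<Sum>i\<le>k. f $ i * tpow k z i w)"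

lemma fps_eval_add: "fps_eval k z (f + g) = (\<lambda>w. fps_eval k z f w + fps_eval k z g w)"
  by (auto simp: fps_eval_def fun_eq_iff algebra_simps sum.distrib)

lemma fps_eval_diff: "fps_eval k z (f - g) = (\<lambda>w. fps_eval k z f w - fps_eval k z g w)"
  by (auto simp: fps_eval_def fun_eq_iff algebra_simps sum_subtractf)

lemma fps_eval_1: "fps_eval k z 1 = tone"
  by (auto simp: fps_eval_def fun_eq_iff fps_one_nth sum_if_eq_mult)

lemma fps_eval_X: "1 \<le> k \<Longrightarrow> fps_eval k z fps_X = truncate k z"
  by (auto simp: fps_eval_def fun_eq_iff fps_X_nth sum_if_eq_mult tpow_one tmul_tone_right)

lemma levels_le_fps_eval[simp]: "levels_le k (fps_eval k z f)"
  using levels_le_tpow by (auto simp: levels_le_def fps_eval_def)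

lemma levels_ge_fps_eval:
  assumes z: "levels_ge 1 z" and f: "f $ 0 = 0"
  shows "levels_ge 1 (fps_eval k z f)"
proof -
  have "f $ i * tpow k z i [] = 0" for i
    using f tpow_apply_short[OF z, of "[]" i k] by (cases i) auto
  then have "fps_eval k z f [] = 0" unfolding fps_eval_def by (intro sum.neutral) blast
  then show ?thesis by simp
qed

lemma fps_eval_mult:
  assumes z: "levels_ge 1 z"
  shows "fps_eval k z (f * g) = tmul k (fps_eval k z f) (fps_eval k z g)"
proof (rule ext)
  fix w
  have "fps_eval k z (f * g) w = (\<Sum>n\<le>k. \<Sum>i\<le>n. f $ i * g $ (n - i) * tpow k z (i + (n - i)) w)"
    unfolding fps_eval_def fps_mult_nth
    by (auto simp: sum_distrib_right atLeast0AtMost intro!: sum.cong)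
  also have "\<dots> = (\<Sum>i\<le>k. \<Sum>j\<le>k. f $ i * g $ j * tpow k z (i + j) w)"
    by (rule sum_triangle_eq_sum_square) (simp add: tpow_nilpotent[OF z])
  also have "\<dots> = (\<Sum>i\<le>k. \<Sum>j\<le>k. f $ i * g $ j * tmul k (tpow k z i) (tpow k z j) w)"
    by (simp add: tpow_add)
  also have "\<dots> = tmul k (fps_eval k z f) (fps_eval k z g) w"
    unfolding fps_eval_def by (subst tmul_sum_sum) auto
  finally show "fps_eval k z (f * g) w = tmul k (fps_eval k z f) (fps_eval k z g) w" .
qed

lemma fps_eval_power: "levels_ge 1 z \<Longrightarrow> tpow k (fps_eval k z f) n = fps_eval k z (f ^ n)"
  by (induct n) (simp_all add: fps_eval_1 fps_eval_mult)

lemma fps_eval_compose: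
  assumes z: "levels_ge 1 z" and g: "g $ 0 = 0"
  shows "fps_eval k z (f oo g) = fps_eval k (fps_eval k z g) f"
proof (rule ext)
  fix w
  have "fps_eval k (fps_eval k z g) f w = (\<Sum>i\<le>k. f $ i * fps_eval k z (g ^ i) w)"
    unfolding fps_eval_def[of k "fps_eval k z g"] by (simp add: fps_eval_power[OF z])
  also have "\<dots> = (\<Sum>i\<le>k. \<Sum>n\<le>k. f $ i * (g ^ i) $ n * tpow k z n w)"
    by (simp add: fps_eval_def sum_distrib_left mult.assoc)
  also have "\<dots> = (\<Sum>n\<le>k. \<Sum>i\<le>k. f $ i * (g ^ i) $ n * tpow k z n w)"
    by (rule sum.swap)
  also have "\<dots> = (\<Sum>n\<le>k. \<Sum>i\<le>n. f $ i * (g ^ i) $ n * tpow k z n w)"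
  proof (rule sum.cong[OF refl])
    fix n assume n: "n \<in> {..k}"
    show "(\<Sum>i\<le>k. f $ i * (g ^ i) $ n * tpow k z n w) = (\<Sum>i\<le>n. f $ i * (g ^ i) $ n * tpow k z n w)"
      by (rule sum.mono_neutral_right) (use n startsby_zero_power_prefix[OF g] in auto)
  qed
  also have "\<dots> = fps_eval k z (f oo g) w"
    by (simp add: fps_eval_def fps_compose_nth sum_distrib_right atLeast0AtMost)
  finally show "fps_eval k z (f oo g) w = fps_eval k (fps_eval k z g) f w" by simp
qed

abbreviation "exp_series \<equiv> fps_exp (1::real)"
abbreviation "log_series \<equiv> fps_ln (1::real)"
abbreviation "geometric_series \<equiv> Abs_fps (\<lambda>n. 1::real)"

lemma texp_fps_eval: "texp k z = fps_eval k z exp_series"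
  by (simp add: texp_def fps_eval_def fps_exp_def)

lemma texp_Nil: "levels_ge 1 a \<Longrightarrow> texp k a [] = 1"
  using levels_ge_fps_eval[of a "exp_series - 1" k]
  by (simp add: texp_fps_eval fps_eval_diff fps_eval_1 tone_def)

lemma tlog_fps_eval: "tlog k s = fps_eval k (tsub s tone) log_series"
proof (rule ext)
  fix w
  have "fps_eval k (tsub s tone) log_series w = (\<Sum>l\<in>insert 0 {1..k}. log_series $ l * tpow k (tsub s tone) l w)"
    unfolding fps_eval_def by (rule sum.cong) auto
  also have "\<dots> = (\<Sum>l\<in>{1..k}. log_series $ l * tpow k (tsub s tone) l w)"
    by simp
  also have "\<dots> = tlog k s w"
    unfolding tlog_def
  proof (rule sum.cong[OF refl])
    fix l assume l: "l \<in> {1..k}"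
    then have "(-1::real) ^ (l - 1) = (-1) ^ (l + 1)"
      by (cases l) simp_all
    then show "log_series $ l * tpow k (tsub s tone) l w = (-1) ^ (l + 1) / real l * tpow k (tsub s tone) l w"
      using l by (simp add: fps_ln_nth)
  qed
  finally show "tlog k s w = fps_eval k (tsub s tone) log_series w" by simp
qed

lemma tinv_fps_eval: "tinv k m = fps_eval k (tsub tone m) geometric_series"
  by (simp add: tinv_def fps_eval_def)

lemma fps_eval_const_mult: "fps_eval k z (fps_const c * f) = (\<lambda>w. c * fps_eval k z f w)"
  by (simp add: fps_eval_def sum_distrib_left mult.assoc fun_eq_iff)

lemma levels_le_tsub_tone: "levels_le k s \<Longrightarrow> levels_le k (tsub s tone)"
  by (simp add: levels_le_def tsub_def tone_def)

lemma tlog_texp: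
  assumes k: "1 \<le> k" and z: "levels_ge 1 z" and c: "levels_le k z"
  shows "tlog k (texp k z) = z"
proof -
  have "tsub (texp k z) tone = fps_eval k z (exp_series - 1)"
    by (simp add: texp_fps_eval fps_eval_diff fps_eval_1 tsub_def)
  then have "tlog k (texp k z) = fps_eval k (fps_eval k z (exp_series - 1)) log_series"
    by (simp add: tlog_fps_eval)
  also have "\<dots> = fps_eval k z (log_series oo (exp_series - 1))"
    by (rule fps_eval_compose[OF z, symmetric]) simp
  also have "log_series oo (exp_series - 1) = fps_X"
    using fps_ln_fps_exp_inv[of "1::real"] fps_inv_fps_exp_compose(1)[of "1::real"] by simp
  finally show ?thesis using fps_eval_X[OF k] c by simp
qed

lemma texp_tlog:
  assumes k: "1 \<le> k" and s0: "s [] = 1" and c: "levels_le k s"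
  shows "texp k (tlog k s) = s"
proof -
  define z where "z = tsub s tone"
  have z: "levels_ge 1 z" using s0 by (simp add: z_def tsub_def tone_def)
  have zc: "levels_le k z" using c by (simp add: z_def levels_le_tsub_tone)
  have "texp k (tlog k s) = fps_eval k (fps_eval k z log_series) exp_series"
    by (simp add: tlog_fps_eval texp_fps_eval z_def)
  also have "\<dots> = fps_eval k z (exp_series oo log_series)"
    by (rule fps_eval_compose[OF z, symmetric]) simp
  also have "exp_series oo log_series = ((exp_series - 1) oo log_series) + 1"
    by (simp add: fps_compose_sub_distrib)
  also have "(exp_series - 1) oo log_series = fps_X"
    using fps_ln_fps_exp_inv[of "1::real"] fps_inv_fps_exp_compose(2)[of "1::real"] by simp
  finally have "texp k (tlog k s) = fps_eval k z (fps_X + 1)" .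
  then show ?thesis
    using fps_eval_X[OF k] zc by (auto simp: fps_eval_add fps_eval_1 z_def tsub_def fun_eq_iff)
qed

lemma tmul_tinv:
  assumes k: "1 \<le> k" and m0: "m [] = 1" and c: "levels_le k m"
  shows "tmul k (tinv k m) m = tone" and "tmul k m (tinv k m) = tone"
proof -
  define z where "z = tsub tone m"
  have z: "levels_ge 1 z" using m0 by (simp add: z_def levels_ge_def tsub_def tone_def)
  have zc: "levels_le k z" using c by (simp add: z_def levels_le_def tsub_def tone_def)
  have m: "m = fps_eval k z (1 - fps_X)"
    using fps_eval_X[OF k] zc by (auto simp: fps_eval_diff fps_eval_1 z_def tsub_def fun_eq_iff)
  have i: "tinv k m = fps_eval k z geometric_series" by (simp add: tinv_fps_eval z_def)
  have g1: "geometric_series * (1 - fps_X) = 1" "(1 - fps_X) * geometric_series = 1"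
    using inverse_mult_eq_1'[of geometric_series] inverse_mult_eq_1[of geometric_series] by (simp_all add: fps_inverse_gp')
  show "tmul k (tinv k m) m = tone"
    by (subst m, simp add: i fps_eval_mult[OF z, symmetric] g1 fps_eval_1)
  show "tmul k m (tinv k m) = tone"
    by (subst (1) m, simp add: i fps_eval_mult[OF z, symmetric] g1 fps_eval_1)
qed

lemma fps_eval_linear: "1 \<le> k \<Longrightarrow> levels_le k z \<Longrightarrow> fps_eval k z (fps_const c * fps_X) = tscale c z"
  by (simp add: fps_eval_const_mult fps_eval_X tscale_def)

lemma tmul_texp_texp_neg:
  assumes k: "1 \<le> k" and z: "levels_ge 1 z" and c: "levels_le k z"
  shows "tmul k (texp k z) (texp k (tscale (-1) z)) = tone"
proof -
  have "texp k (tscale (-1) z) = fps_eval k (fps_eval k z (fps_const (-1) * fps_X)) exp_series"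
    by (simp add: texp_fps_eval fps_eval_linear[OF k c])
  also have "\<dots> = fps_eval k z (exp_series oo (fps_const (-1) * fps_X))"
    by (rule fps_eval_compose[OF z, symmetric]) simp
  also have "exp_series oo (fps_const (-1) * fps_X) = fps_exp (-1)"
    by simp
  finally have "tmul k (texp k z) (texp k (tscale (-1) z)) = fps_eval k z (exp_series * fps_exp (-1))"
    by (simp add: texp_fps_eval fps_eval_mult[OF z])
  also have "exp_series * fps_exp (-1) = 1"
    by (simp flip: fps_exp_add_mult)
  finally show ?thesis by (simp add: fps_eval_1)
qed

lemma tpow_texp:
  assumes k: "1 \<le> k" and z: "levels_ge 1 z" and c: "levels_le k z"
  shows "tpow k (texp k z) n = texp k (tscale (real n) z)"
proof -
  have "tpow k (texp k z) n = fps_eval k z (exp_series ^ n)"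
    by (simp add: texp_fps_eval fps_eval_power[OF z])
  also have "exp_series ^ n = fps_exp (real n)"
    by (simp add: fps_exp_power_mult)
  also have "fps_exp (real n) = exp_series oo (fps_const (real n) * fps_X)"
    by simp
  also have "fps_eval k z \<dots> = fps_eval k (fps_eval k z (fps_const (real n) * fps_X)) exp_series"
    by (rule fps_eval_compose[OF z]) simp
  finally show ?thesis by (simp add: texp_fps_eval fps_eval_linear[OF k c])
qed

lemma tpow_tscale: "tpow k (tscale t c) l = tscale (t ^ l) (tpow k c l)"
proof (induct l)
  case 0 then show ?case by (simp add: tscale_def)
next
  case (Suc l)
  then show ?case by (simp add: tscale_def tmul_scale_left tmul_scale_right mult.assoc)
qed

lemma tlog_tone: "tlog k tone = tzero"
proof -
  have "tpow k (tsub tone tone) l = tzero" if "1 \<le> l" for l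
    using that by (cases l) (simp_all add: tsub_def tzero_def tmul_zero_left)
  then show ?thesis by (simp add: tlog_def tzero_def)
qed

section \<open>Riffles and shuffle coefficients\<close>

fun riffle :: "bool list \<Rightarrow> 'a list \<Rightarrow> 'a list \<Rightarrow> 'a list" where
  "riffle [] x y = []"
| "riffle (True # m) x y = hd x # riffle m (tl x) y"
| "riffle (False # m) x y = hd y # riffle m x (tl y)"

definition count_true :: "bool list \<Rightarrow> nat" where "count_true m = length (filter id m)"

definition riffle_masks :: "nat \<Rightarrow> nat \<Rightarrow> bool list set" where
  "riffle_masks p q = {m. length m = p + q \<and> count_true m = p}"

text \<open>The coefficient of e_x \<otimes> e_y in the deshuffle coproduct of z, i.e. the pairing of z
  with the shuffle product of x and y.\<close>
definition shuffle_coeff :: "tensor \<Rightarrow> nat list \<Rightarrow> nat list \<Rightarrow> real" where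
  "shuffle_coeff z x y = (\<Sum>m\<in>riffle_masks (length x) (length y). z (riffle m x y))"

lemma count_true_simps[simp]: "count_true [] = 0" "count_true (True # m) = Suc (count_true m)" "count_true (False # m) = count_true m"
  "count_true (m1 @ m2) = count_true m1 + count_true m2"
  by (simp_all add: count_true_def)

lemma count_true_le: "count_true m \<le> length m"
  by (simp add: count_true_def)

lemma finite_riffle_masks[simp]: "finite (riffle_masks p q)"
proof -
  have "riffle_masks p q \<subseteq> {m. set m \<subseteq> UNIV \<and> length m = p + q}" by (auto simp: riffle_masks_def)
  moreover have "finite {m::bool list. set m \<subseteq> UNIV \<and> length m = p + q}"
    by (rule finite_lists_length_eq) simp
  ultimately show ?thesis by (rule finite_subset)
qed

lemma length_riffle[simp]: "length (riffle m x y) = length m"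
  by (induct m x y rule: riffle.induct) auto

lemma take_riffle: "take t (riffle m x y) = riffle (take t m) x y"
proof (induct m x y arbitrary: t rule: riffle.induct)
  case (1 x y) then show ?case by simp
next
  case (2 m x y) then show ?case by (cases t) auto
next
  case (3 m x y) then show ?case by (cases t) auto
qed

lemma drop_riffle: "drop t (riffle m x y) = riffle (drop t m) (drop (count_true (take t m)) x) (drop (t - count_true (take t m)) y)"
proof (induct m x y arbitrary: t rule: riffle.induct)
  case (1 x y) then show ?case by simp
next
  case (2 m x y) then show ?case by (cases t) (auto simp: drop_Suc)
next
  case (3 m x y)
  show ?case
  proof (cases t)
    case 0 then show ?thesis by simp
  next
    case (Suc t')
    have "count_true (take t' m) \<le> t'" using count_true_le[of "take t' m"] by simp
    then have "Suc t' - count_true (take t' m) = Suc (t' - count_true (take t' m))" by simp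
    then show ?thesis using Suc 3 by (simp add: drop_Suc)
  qed
qed

lemma riffle_take: "riffle m x y = riffle m (take (count_true m) x) (take (length m - count_true m) y)"
proof (induct m x y rule: riffle.induct)
  case (1 x y) then show ?case by simp
next
  case (2 m x y)
  then show ?case by (cases x) (auto simp: tl_take)
next
  case (3 m x y)
  have "count_true m \<le> length m" by (rule count_true_le)
  then have "Suc (length m) - count_true m = Suc (length m - count_true m)" by simp
  then show ?case using 3 by (cases y) (auto simp: tl_take)
qed

lemma take_drop_riffle_masks:
  assumes m: "m \<in> riffle_masks p q" and t: "t \<le> p + q"
  defines "i \<equiv> count_true (take t m)"
  shows "i \<le> p" and "t - i \<le> q" and "take t m \<in> riffle_masks i (t - i)"
    and "drop t m \<in> riffle_masks (p - i) (q - (t - i))"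
proof -
  have lm: "length m = p + q" "count_true m = p" using m by (auto simp: riffle_masks_def)
  have split: "count_true m = i + count_true (drop t m)"
    unfolding i_def by (metis append_take_drop_id count_true_simps(4))
  have it: "i \<le> t" using count_true_le[of "take t m"] t lm by (simp add: i_def)
  have rest: "count_true (drop t m) \<le> p + q - t" using count_true_le[of "drop t m"] lm by simp
  show ip: "i \<le> p" using split lm by linarith
  show tq: "t - i \<le> q" using split lm rest t by linarith
  show "take t m \<in> riffle_masks i (t - i)" using it t lm by (simp add: riffle_masks_def i_def)
  have "count_true (drop t m) = p - i" using split lm by simp
  moreover have "length (drop t m) = (p - i) + (q - (t - i))" using lm ip tq it t by simp
  ultimately show "drop t m \<in> riffle_masks (p - i) (q - (t - i))" by (simp add: riffle_masks_def)
qed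

lemma sum_riffle_masks_split:
  fixes F :: "bool list \<Rightarrow> bool list \<Rightarrow> real"
  shows "(\<Sum>m\<in>riffle_masks p q. \<Sum>t\<le>p + q. F (take t m) (drop t m))
       = (\<Sum>i\<le>p. \<Sum>j\<le>q. \<Sum>m1\<in>riffle_masks i j. \<Sum>m2\<in>riffle_masks (p - i) (q - j). F m1 m2)"
proof -
  have "(\<Sum>(m,t)\<in>Sigma (riffle_masks p q) (\<lambda>_. {..p+q}). F (take t m) (drop t m))
      = (\<Sum>((i,j),(m1,m2))\<in>Sigma ({..p} \<times> {..q}) (\<lambda>(i,j). riffle_masks i j \<times> riffle_masks (p - i) (q - j)). F m1 m2)"
  proof (rule sum.reindex_bij_witness[where i = "\<lambda>((i,j),(m1,m2)). (m1 @ m2, length m1)"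
        and j = "\<lambda>(m,t). ((count_true (take t m), t - count_true (take t m)), (take t m, drop t m))"], goal_cases)
    case (1 a)
    then obtain m t where "a = (m, t)" "m \<in> riffle_masks p q" "t \<le> p + q" by auto
    then show ?case by (simp add: riffle_masks_def)
  next
    case (2 a)
    then obtain m t where "a = (m, t)" "m \<in> riffle_masks p q" "t \<le> p + q" by auto
    then show ?case using take_drop_riffle_masks[of m p q t] by simp
  next
    case (3 b)
    then obtain i j m1 m2 where "b = ((i,j),(m1,m2))" "m1 \<in> riffle_masks i j" by auto
    then show ?case by (auto simp: riffle_masks_def)
  next
    case (4 b)
    then obtain i j m1 m2 where "b = ((i,j),(m1,m2))" "i \<le> p" "j \<le> q" "m1 \<in> riffle_masks i j"
      "m2 \<in> riffle_masks (p - i) (q - j)" by auto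
    then show ?case by (auto simp: riffle_masks_def)
  qed auto
  moreover have "(\<Sum>m\<in>riffle_masks p q. \<Sum>t\<le>p + q. F (take t m) (drop t m))
      = (\<Sum>(m,t)\<in>Sigma (riffle_masks p q) (\<lambda>_. {..p+q}). F (take t m) (drop t m))"
    by (rule sum.Sigma) auto
  moreover have "(\<Sum>((i,j),(m1,m2))\<in>Sigma ({..p} \<times> {..q}) (\<lambda>(i,j). riffle_masks i j \<times> riffle_masks (p - i) (q - j)). F m1 m2)
      = (\<Sum>ij\<in>{..p} \<times> {..q}. \<Sum>mm\<in>riffle_masks (fst ij) (snd ij) \<times> riffle_masks (p - fst ij) (q - snd ij). F (fst mm) (snd mm))"
    by (subst sum.Sigma) (auto simp: split_def)
  moreover have "\<dots> = (\<Sum>i\<le>p. \<Sum>j\<le>q. \<Sum>m1\<in>riffle_masks i j. \<Sum>m2\<in>riffle_masks (p - i) (q - j). F m1 m2)"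
    by (subst sum.Sigma) (auto simp: split_def sum.cartesian_product intro!: sum.cong)
  ultimately show ?thesis by simp
qed

lemma tmul_apply_riffle:
  assumes "length m \<le> k"
  shows "tmul k a b (riffle m x y) = (\<Sum>t\<le>length m. a (riffle (take t m) x y) *
    b (riffle (drop t m) (drop (count_true (take t m)) x)
      (drop (length (take t m) - count_true (take t m)) y)))"
  using assms by (auto simp: tmul_apply take_riffle drop_riffle min_def intro!: sum.cong)

lemma shuffle_coeff_tmul:
  assumes xy: "length x + length y \<le> k"
  shows "shuffle_coeff (tmul k a b) x y = (\<Sum>i\<le>length x. \<Sum>j\<le>length y.
            shuffle_coeff a (take i x) (take j y) * shuffle_coeff b (drop i x) (drop j y))"
proof -
  define p where "p = length x"
  define q where "q = length y"
  define F where "F m1 m2 = a (riffle m1 x y) *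
      b (riffle m2 (drop (count_true m1) x) (drop (length m1 - count_true m1) y))" for m1 m2
  have "shuffle_coeff (tmul k a b) x y = (\<Sum>m\<in>riffle_masks p q. \<Sum>t\<le>p + q. F (take t m) (drop t m))"
    unfolding shuffle_coeff_def p_def[symmetric] q_def[symmetric]
    using xy by (intro sum.cong[OF refl]) (simp add: tmul_apply_riffle riffle_masks_def F_def p_def q_def)
  also have "\<dots> = (\<Sum>i\<le>p. \<Sum>j\<le>q. \<Sum>m1\<in>riffle_masks i j. \<Sum>m2\<in>riffle_masks (p - i) (q - j). F m1 m2)"
    by (rule sum_riffle_masks_split)
  also have "\<dots> = (\<Sum>i\<le>p. \<Sum>j\<le>q. \<Sum>m1\<in>riffle_masks i j. \<Sum>m2\<in>riffle_masks (p - i) (q - j).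
      a (riffle m1 (take i x) (take j y)) * b (riffle m2 (drop i x) (drop j y)))"
  proof (intro sum.cong[OF refl])
    fix i j m1 m2 assume "m1 \<in> riffle_masks i j"
    moreover from this have "riffle m1 x y = riffle m1 (take i x) (take j y)"
      by (subst riffle_take) (simp add: riffle_masks_def)
    ultimately show "F m1 m2 = a (riffle m1 (take i x) (take j y)) * b (riffle m2 (drop i x) (drop j y))"
      by (simp add: F_def riffle_masks_def)
  qed
  also have "\<dots> = (\<Sum>i\<le>p. \<Sum>j\<le>q. shuffle_coeff a (take i x) (take j y) * shuffle_coeff b (drop i x) (drop j y))"
    by (intro sum.cong[OF refl]) (simp add: shuffle_coeff_def p_def q_def sum_product)
  finally show ?thesis by (simp add: p_def q_def)
qed

lemma riffle_masks_0_left: "riffle_masks 0 q = {replicate q False}"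
proof -
  have "m \<in> riffle_masks 0 q \<longleftrightarrow> m = replicate q False" for m
  proof
    assume "m \<in> riffle_masks 0 q"
    then have "length m = q" "filter id m = []" by (auto simp: riffle_masks_def count_true_def)
    then show "m = replicate q False"
      by (intro replicate_eqI) (auto simp: filter_empty_conv)
  qed (simp add: riffle_masks_def count_true_def)
  then show ?thesis by auto
qed

lemma riffle_masks_0_right: "riffle_masks p 0 = {replicate p True}"
proof -
  have "m \<in> riffle_masks p 0 \<longleftrightarrow> m = replicate p True" for m
  proof
    assume "m \<in> riffle_masks p 0"
    then have "length m = p" "length (filter id m) = length m" by (auto simp: riffle_masks_def count_true_def)
    then show "m = replicate p True"
    proof (intro replicate_eqI)
      fix b assume "length (filter id m) = length m" "b \<in> set m"
      then show "b = True" using length_filter_less[of b m id] by auto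
    qed simp
  qed (simp add: riffle_masks_def count_true_def)
  then show ?thesis by auto
qed

lemma riffle_replicate_False: "length y = q \<Longrightarrow> riffle (replicate q False) x y = y"
  by (induct q arbitrary: y) (auto simp: length_Suc_conv)

lemma riffle_replicate_True: "length x = p \<Longrightarrow> riffle (replicate p True) x y = x"
  by (induct p arbitrary: x) (auto simp: length_Suc_conv)

lemma shuffle_coeff_Nil_left[simp]: "shuffle_coeff z [] y = z y"
  by (simp add: shuffle_coeff_def riffle_masks_0_left riffle_replicate_False)

lemma shuffle_coeff_Nil_right[simp]: "shuffle_coeff z x [] = z x"
  by (simp add: shuffle_coeff_def riffle_masks_0_right riffle_replicate_True)

lemma shuffle_coeff_zero[simp]: "shuffle_coeff (\<lambda>w. 0) x y = 0"
  by (simp add: shuffle_coeff_def)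

lemma shuffle_coeff_add: "shuffle_coeff (\<lambda>w. a w + b w) x y = shuffle_coeff a x y + shuffle_coeff b x y"
  by (simp add: shuffle_coeff_def sum.distrib)

lemma shuffle_coeff_diff: "shuffle_coeff (\<lambda>w. a w - b w) x y = shuffle_coeff a x y - shuffle_coeff b x y"
  by (simp add: shuffle_coeff_def sum_subtractf)

lemma shuffle_coeff_scale: "shuffle_coeff (\<lambda>w. c * a w) x y = c * shuffle_coeff a x y"
  by (simp add: shuffle_coeff_def sum_distrib_left)

lemma shuffle_coeff_sum: "shuffle_coeff (\<lambda>w. \<Sum>i\<in>S. f i w) x y = (\<Sum>i\<in>S. shuffle_coeff (f i) x y)"
  unfolding shuffle_coeff_def by (rule sum.swap)

lemma riffle_eq_Nil_iff[simp]: "riffle m x y = [] \<longleftrightarrow> m = []"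
  by (cases m rule: list.exhaust; cases "hd m") auto

lemma shuffle_coeff_tone: "shuffle_coeff tone x y = tone x * tone y"
proof (cases "x = [] \<and> y = []")
  case True then show ?thesis by (simp add: tone_def)
next
  case False
  have "shuffle_coeff tone x y = 0" unfolding shuffle_coeff_def
  proof (rule sum.neutral, rule ballI)
    fix m assume "m \<in> riffle_masks (length x) (length y)"
    then have "length m = length x + length y" by (simp add: riffle_masks_def)
    then have "riffle m x y \<noteq> []" using False by auto
    then show "tone (riffle m x y) = 0" by (simp add: tone_def)
  qed
  then show ?thesis using False by (auto simp: tone_def)
qed

section \<open>Primitive elements\<close>

text \<open>\<Delta>p = p \<otimes> 1 + 1 \<otimes> p on pairs of words of total length at most k.\<close>
definition primitive :: "nat \<Rightarrow> tensor \<Rightarrow> bool" where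
  "primitive k p \<longleftrightarrow> p [] = 0 \<and> (\<forall>x y. x \<noteq> [] \<longrightarrow> y \<noteq> [] \<longrightarrow> length x + length y \<le> k \<longrightarrow> shuffle_coeff p x y = 0)"

lemma primitive_shuffle_coeff:
  assumes "primitive k a" and "length u + length v \<le> k"
  shows "shuffle_coeff a u v = (if u = [] then a v else 0) + (if v = [] then a u else 0)"
  using assms by (auto simp: primitive_def)

lemma shuffle_coeff_tmul_primitive:
  assumes a: "primitive k a" and xy: "length x + length y \<le> k"
  shows "shuffle_coeff (tmul k a b) x y =
    (\<Sum>j\<le>length y. a (take j y) * shuffle_coeff b x (drop j y)) +
    (\<Sum>i\<le>length x. a (take i x) * shuffle_coeff b (drop i x) y)"
proof -
  have "shuffle_coeff (tmul k a b) x y = (\<Sum>i\<le>length x. \<Sum>j\<le>length y.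
      (if i = 0 then a (take j y) * shuffle_coeff b (drop i x) (drop j y) else 0) +
      (if j = 0 then a (take i x) * shuffle_coeff b (drop i x) (drop j y) else 0))"
    unfolding shuffle_coeff_tmul[OF xy]
  proof (intro sum.cong[OF refl])
    fix i j assume i: "i \<in> {..length x}" and j: "j \<in> {..length y}"
    have "length (take i x) + length (take j y) \<le> k" using xy i j by auto
    moreover have "take i x = [] \<longleftrightarrow> i = 0" "take j y = [] \<longleftrightarrow> j = 0" using i j by auto
    ultimately show "shuffle_coeff a (take i x) (take j y) * shuffle_coeff b (drop i x) (drop j y) =
      (if i = 0 then a (take j y) * shuffle_coeff b (drop i x) (drop j y) else 0) +
      (if j = 0 then a (take i x) * shuffle_coeff b (drop i x) (drop j y) else 0)"
      using primitive_shuffle_coeff[OF a] by (simp add: distrib_right)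
  qed
  also have "\<dots> = (\<Sum>j\<le>length y. a (take j y) * shuffle_coeff b x (drop j y)) +
      (\<Sum>i\<le>length x. a (take i x) * shuffle_coeff b (drop i x) y)"
    by (simp only: sum.distrib sum_if_fst_0) simp
  finally show ?thesis .
qed

lemma primitive_shuffle_coeff_tmul:
  assumes a: "primitive k a" and b: "primitive k b" and x: "x \<noteq> []" and y: "y \<noteq> []"
    and xy: "length x + length y \<le> k"
  shows "shuffle_coeff (tmul k a b) x y = a y * b x + a x * b y"
proof -
  have "(\<Sum>j\<le>length y. a (take j y) * shuffle_coeff b x (drop j y))
      = (\<Sum>j\<le>length y. if j = length y then a y * b x else 0)"
    using primitive_shuffle_coeff[OF b, of x "drop _ y"] xy x by (intro sum.cong) auto
  moreover have "(\<Sum>i\<le>length x. a (take i x) * shuffle_coeff b (drop i x) y)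
      = (\<Sum>i\<le>length x. if i = length x then a x * b y else 0)"
    using primitive_shuffle_coeff[OF b, of "drop _ x" y] xy y by (intro sum.cong) auto
  ultimately show ?thesis
    by (simp add: shuffle_coeff_tmul_primitive[OF a xy])
qed

lemma primitive_tbracket:
  assumes a: "primitive k a" and b: "primitive k b"
  shows "primitive k (tbracket k a b)"
  unfolding primitive_def
proof (intro conjI allI impI)
  show "tbracket k a b [] = 0"
    using a b by (simp add: primitive_def tbracket_def tsub_def tmul_def)
  fix x y :: "nat list" assume "x \<noteq> []" "y \<noteq> []" "length x + length y \<le> k"
  then show "shuffle_coeff (tbracket k a b) x y = 0"
    unfolding tbracket_def tsub_def shuffle_coeff_diff
    using primitive_shuffle_coeff_tmul[OF a b] primitive_shuffle_coeff_tmul[OF b a] by simp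
qed

lemma primitive_basis_vec: "primitive k (basis_vec i)"
  unfolding primitive_def
proof (intro conjI allI impI)
  show "basis_vec i [] = 0" by (simp add: basis_vec_def)
  fix x y :: "nat list" assume xy: "x \<noteq> []" "y \<noteq> []"
  show "shuffle_coeff (basis_vec i) x y = 0"
    unfolding shuffle_coeff_def
  proof (rule sum.neutral, rule ballI)
    fix m assume "m \<in> riffle_masks (length x) (length y)"
    then have "length (riffle m x y) = length x + length y" by (simp add: riffle_masks_def)
    moreover have "length x + length y \<ge> 2" using xy by (cases x; cases y; simp)
    ultimately have "length (riffle m x y) \<noteq> length [i]" by simp
    then have "riffle m x y \<noteq> [i]" by metis
    then show "basis_vec i (riffle m x y) = 0" by (simp add: basis_vec_def)
  qed
qed

lemma primitive_tzero: "primitive k tzero"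
  by (simp add: primitive_def tzero_def)

lemma primitive_tadd: "primitive k a \<Longrightarrow> primitive k b \<Longrightarrow> primitive k (tadd a b)"
  by (simp add: primitive_def tadd_def shuffle_coeff_add)

lemma primitive_tscale: "primitive k a \<Longrightarrow> primitive k (tscale c a)"
  by (simp add: primitive_def tscale_def shuffle_coeff_scale)

lemma lie_alg_primitive: "z \<in> lie_alg d k \<Longrightarrow> primitive k z"
  by (induct z rule: lie_alg.induct)
     (auto intro: primitive_basis_vec primitive_tzero primitive_tadd primitive_tscale primitive_tbracket)

section \<open>Group-like elements\<close>

text \<open>\<Delta>g = g \<otimes> g on pairs of words of total length at most k.\<close>
definition group_like :: "nat \<Rightarrow> tensor \<Rightarrow> bool" where
  "group_like k g \<longleftrightarrow> g [] = 1 \<and> (\<forall>x y. length x + length y \<le> k \<longrightarrow> shuffle_coeff g x y = g x * g y)"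

lemma group_like_tone: "group_like k tone"
  by (simp add: group_like_def shuffle_coeff_tone) (simp add: tone_def)

lemma group_like_tmul:
  assumes g: "group_like k g" and h: "group_like k h"
  shows "group_like k (tmul k g h)"
  unfolding group_like_def
proof (intro conjI allI impI)
  show "tmul k g h [] = 1" using g h by (simp add: group_like_def tmul_def)
  fix x y :: "nat list" assume xy: "length x + length y \<le> k"
  have lx: "length x \<le> k" and ly: "length y \<le> k" using xy by auto
  have "shuffle_coeff (tmul k g h) x y = (\<Sum>i\<le>length x. \<Sum>j\<le>length y.
      (g (take i x) * h (drop i x)) * (g (take j y) * h (drop j y)))"
    unfolding shuffle_coeff_tmul[OF xy]
  proof (intro sum.cong[OF refl])
    fix i j assume i: "i \<in> {..length x}" and j: "j \<in> {..length y}"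
    have "length (take i x) + length (take j y) \<le> k" "length (drop i x) + length (drop j y) \<le> k"
      using xy i j by auto
    then show "shuffle_coeff g (take i x) (take j y) * shuffle_coeff h (drop i x) (drop j y) =
        (g (take i x) * h (drop i x)) * (g (take j y) * h (drop j y))"
      using g h by (simp add: group_like_def)
  qed
  also have "\<dots> = tmul k g h x * tmul k g h y"
    by (simp add: tmul_apply[OF lx] tmul_apply[OF ly] sum_product)
  finally show "shuffle_coeff (tmul k g h) x y = tmul k g h x * tmul k g h y" .
qed

lemma group_like_tpow: "group_like k g \<Longrightarrow> group_like k (tpow k g n)"
  by (induct n) (simp_all add: group_like_tone group_like_tmul)

lemma shuffle_coeff_tpow_primitive:
  assumes a: "primitive k a"
  shows "length x + length y \<le> k \<Longrightarrow>
    shuffle_coeff (tpow k a n) x y = (\<Sum>l\<le>n. real (n choose l) * tpow k a l x * tpow k a (n - l) y)"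
proof (induct n arbitrary: x y)
  case 0
  then show ?case by (simp add: shuffle_coeff_tone)
next
  case (Suc n)
  note xy = Suc.prems
  have lx: "length x \<le> k" and ly: "length y \<le> k" using xy by auto
  define P where "P l w = tpow k a l w" for l w
  have "(\<Sum>j\<le>length y. a (take j y) * shuffle_coeff (tpow k a n) x (drop j y)) =
       (\<Sum>l\<le>n. real (n choose l) * P l x * P (Suc n - l) y)"
  proof -
    have "(\<Sum>j\<le>length y. a (take j y) * shuffle_coeff (tpow k a n) x (drop j y)) =
        (\<Sum>l\<le>n. real (n choose l) * P l x * (\<Sum>j\<le>length y. a (take j y) * P (n - l) (drop j y)))"
      using xy by (simp add: Suc.hyps sum_distrib_left P_def algebra_simps) (rule sum.swap)
    also have "\<dots> = (\<Sum>l\<le>n. real (n choose l) * P l x * P (Suc n - l) y)"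
      by (intro sum.cong[OF refl]) (simp add: P_def tmul_apply[OF ly] Suc_diff_le)
    finally show ?thesis .
  qed
  moreover have "(\<Sum>i\<le>length x. a (take i x) * shuffle_coeff (tpow k a n) (drop i x) y) =
       (\<Sum>l\<le>n. real (n choose l) * P (Suc l) x * P (n - l) y)"
  proof -
    have "(\<Sum>i\<le>length x. a (take i x) * shuffle_coeff (tpow k a n) (drop i x) y) =
        (\<Sum>l\<le>n. real (n choose l) * (\<Sum>i\<le>length x. a (take i x) * P l (drop i x)) * P (n - l) y)"
      using xy by (simp add: Suc.hyps sum_distrib_left sum_distrib_right P_def algebra_simps) (rule sum.swap)
    also have "\<dots> = (\<Sum>l\<le>n. real (n choose l) * P (Suc l) x * P (n - l) y)"
      by (simp add: P_def tmul_apply[OF lx])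
    finally show ?thesis .
  qed
  ultimately show ?case
    using shuffle_coeff_tmul_primitive[OF a xy, of "tpow k a n"]
      sum_binomial_Suc_split[where f="\<lambda>l. P l x" and g="\<lambda>l. P l y" and n=n]
    by (simp add: P_def)
qed

lemma group_like_texp:
  assumes a: "primitive k a"
  shows "group_like k (texp k a)"
  unfolding group_like_def
proof (intro conjI allI impI)
  have a1: "levels_ge 1 a" using a by (simp add: primitive_def)
  show "texp k a [] = 1" by (rule texp_Nil[OF a1])
  fix x y :: "nat list" assume xy: "length x + length y \<le> k"
  define F where "F l = tpow k a l x / fact l" for l
  define G where "G l = tpow k a l y / fact l" for l
  have "shuffle_coeff (texp k a) x y = (\<Sum>n\<le>k. 1 / fact n * shuffle_coeff (tpow k a n) x y)"
    unfolding texp_def shuffle_coeff_sum shuffle_coeff_scale ..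
  also have "\<dots> = (\<Sum>n\<le>k. \<Sum>l\<le>n. F l * G (n - l))"
  proof (intro sum.cong[OF refl])
    fix n
    have "1 / fact n * shuffle_coeff (tpow k a n) x y
        = (\<Sum>l\<le>n. 1 / fact n * (real (n choose l) * tpow k a l x * tpow k a (n - l) y))"
      by (simp add: shuffle_coeff_tpow_primitive[OF a xy] sum_distrib_left)
    also have "\<dots> = (\<Sum>l\<le>n. F l * G (n - l))"
      by (intro sum.cong[OF refl]) (auto simp: F_def G_def binomial_fact field_simps)
    finally show "1 / fact n * shuffle_coeff (tpow k a n) x y = (\<Sum>l\<le>n. F l * G (n - l))" .
  qed
  also have "\<dots> = (\<Sum>l\<le>k. \<Sum>m\<le>k. F l * G m)"
  proof (rule sum_triangle_eq_sum_square)
    fix l m assume "k < l + m"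
    then have "length x < l \<or> length y < m" using xy by linarith
    then show "F l * G m = 0" using tpow_apply_short[OF a1] by (auto simp: F_def G_def)
  qed
  also have "\<dots> = texp k a x * texp k a y"
    by (simp add: texp_def F_def G_def sum_product)
  finally show "shuffle_coeff (texp k a) x y = texp k a x * texp k a y" .
qed

text \<open>Group-likeness of exp(t c) is a polynomial identity in t that holds for all t \<in> \<nat>,
  hence identically; its coefficient of t is the primitivity of c.\<close>
lemma primitive_if_group_like_texp_nat_mult:
  assumes k: "1 \<le> k" and c1: "levels_ge 1 c" and cc: "levels_le k c"
    and group_like: "\<And>n::nat. group_like k (texp k (tscale (real n) c))"
  shows "primitive k c"
  unfolding primitive_def
proof (intro conjI allI impI)
  show "c [] = 0" using c1 by simp
  fix x y :: "nat list" assume x: "x \<noteq> []" and y: "y \<noteq> []" and xy: "length x + length y \<le> k"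
  have te: "texp k (tscale t c) w = (\<Sum>l\<le>k. 1 / fact l * (t ^ l * tpow k c l w))" for t w
    unfolding texp_def tpow_tscale by (simp add: tscale_def)
  define A where "A = (\<Sum>l\<le>k. monom (shuffle_coeff (tpow k c l) x y / fact l) l)"
  define B where "B = (\<Sum>l\<le>k. monom (tpow k c l x / fact l) l)"
  define C where "C = (\<Sum>l\<le>k. monom (tpow k c l y / fact l) l)"
  have "poly (A - B * C) (real n) = 0" for n
  proof -
    have "shuffle_coeff (texp k (tscale (real n) c)) x y = texp k (tscale (real n) c) x * texp k (tscale (real n) c) y"
      using group_like[of n] xy by (simp add: group_like_def)
    moreover have "shuffle_coeff (texp k (tscale (real n) c)) x y = poly A (real n)"
      unfolding te shuffle_coeff_sum shuffle_coeff_scale A_def by (simp add: poly_sum poly_monom shuffle_coeff_scale field_simps)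
    moreover have "texp k (tscale (real n) c) x = poly B (real n)" "texp k (tscale (real n) c) y = poly C (real n)"
      unfolding te B_def C_def by (simp_all add: poly_sum poly_monom field_simps)
    ultimately show ?thesis by simp
  qed
  then have "A - B * C = 0" by (rule poly_eq_0_if_nat_roots)
  then have "coeff (A - B * C) 1 = 0" by simp
  moreover have "coeff A 1 = shuffle_coeff c x y"
    using k cc by (simp add: A_def coeff_sum tmul_tone_right)
  moreover have "coeff B 0 = 0" "coeff C 0 = 0"
    using x y by (simp_all add: B_def C_def coeff_sum tone_def)
  moreover have "coeff (B * C) 1 = coeff B 0 * coeff C 1 + coeff B 1 * coeff C 0"
    by (simp add: coeff_mult)
  ultimately show "shuffle_coeff c x y = 0" by simp
qed

lemma primitive_tlog:
  assumes k: "1 \<le> k" and g: "group_like k g" and gc: "levels_le k g"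
  shows "primitive k (tlog k g)"
proof (rule primitive_if_group_like_texp_nat_mult[OF k])
  have g0: "g [] = 1" using g by (simp add: group_like_def)
  show c1: "levels_ge 1 (tlog k g)"
    unfolding tlog_fps_eval by (rule levels_ge_fps_eval) (simp_all add: g0 tsub_def tone_def)
  show cc: "levels_le k (tlog k g)" unfolding tlog_fps_eval by simp
  fix n :: nat
  show "group_like k (texp k (tscale (real n) (tlog k g)))"
    using group_like_tpow[OF g, of n] tpow_texp[OF k c1 cc, of n] texp_tlog[OF k g0 gc] by simp
qed

section \<open>The Dynkin--Specht--Wever projection\<close>

fun mask_select :: "bool list \<Rightarrow> 'a list \<Rightarrow> 'a list" where
  "mask_select [] w = []"
| "mask_select (b # m) [] = []"
| "mask_select (b # m) (a # w) = (if b then a # mask_select m w else mask_select m w)"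

fun rbracket :: "nat \<Rightarrow> nat list \<Rightarrow> tensor" where
  "rbracket k [] = tzero"
| "rbracket k [a] = basis_vec a"
| "rbracket k (a # b # v) = tbracket k (basis_vec a) (rbracket k (b # v))"

definition word_vec :: "nat list \<Rightarrow> tensor" where "word_vec w = (\<lambda>u. if u = w then 1 else 0)"

lemma basis_vec_word_vec: "basis_vec a = word_vec [a]"
  by (simp add: basis_vec_def word_vec_def)

lemma tmul_word_vec: "length (u @ v) \<le> k \<Longrightarrow> tmul k (word_vec u) (word_vec v) = word_vec (u @ v)"
proof (rule ext)
  fix w assume l: "length (u @ v) \<le> k"
  show "tmul k (word_vec u) (word_vec v) w = word_vec (u @ v) w"
  proof (cases "length w \<le> k")
    case True
    have "tmul k (word_vec u) (word_vec v) w = (\<Sum>i\<le>length w. if i = length u \<and> w = u @ v then 1 else 0)"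
      unfolding tmul_apply[OF True]
    proof (rule sum.cong[OF refl])
      fix i assume "i \<in> {..length w}"
      then have iw: "i \<le> length w" by simp
      have iff: "(take i w = u \<and> drop i w = v) \<longleftrightarrow> (i = length u \<and> w = u @ v)"
      proof
        assume h: "take i w = u \<and> drop i w = v"
        then have "length u = i" using iw by auto
        moreover have "w = u @ v" using h by (metis append_take_drop_id)
        ultimately show "i = length u \<and> w = u @ v" by simp
      qed auto
      show "word_vec u (take i w) * word_vec v (drop i w) = (if i = length u \<and> w = u @ v then 1 else 0)"
        unfolding word_vec_def iff[symmetric] by simp
    qed
    also have "\<dots> = word_vec (u @ v) w"
      by (auto simp: word_vec_def sum.If_cases)
    finally show ?thesis .
  next
    case False
    then have "w \<noteq> u @ v" using l by auto
    then show ?thesis using False by (simp add: tmul_def word_vec_def)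
  qed
qed

lemma rbracket_Cons: "rbracket k (a # u) = (if u = [] then basis_vec a else tbracket k (basis_vec a) (rbracket k u))"
  by (cases u) auto

lemma levels_le_rbracket: "1 \<le> k \<Longrightarrow> levels_le k (rbracket k w)"
proof (induct w rule: rbracket.induct)
  case (1 k) then show ?case by (simp add: levels_le_def tzero_def)
next
  case (2 k a) then show ?case by (auto simp: levels_le_def basis_vec_def)
next
  case (3 k a b v) then show ?case by (simp add: levels_le_def tbracket_def tsub_def tmul_def)
qed

lemma mask_select_eq_Nil_iff: "length m = length v \<Longrightarrow> mask_select m v = [] \<longleftrightarrow> m = replicate (length v) False"
proof (induct m v rule: mask_select.induct)
  case (3 b m a w) then show ?case by auto
qed auto

lemma mask_select_replicate_True: "mask_select (replicate (length v) True) v = v"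
  by (induct v) auto

lemma tmul_rbracket_Cons_word_vec:
  assumes "length (a # y) \<le> k"
  shows "tmul k (rbracket k (a # x)) (word_vec y) w + tmul k (rbracket k x) (word_vec (a # y)) w
    = (if x = [] then word_vec (a # y) w else 0) + tmul k (basis_vec a) (tmul k (rbracket k x) (word_vec y)) w"
proof -
  have ay: "tmul k (basis_vec a) (word_vec y) = word_vec (a # y)"
    using tmul_word_vec[of "[a]" y k] assms by (simp add: basis_vec_word_vec)
  show ?thesis
  proof (cases "x = []")
    case True
    then show ?thesis using ay by (simp add: tzero_def tmul_zero_left tmul_zero_right)
  next
    case False
    then show ?thesis
      by (simp add: rbracket_Cons tbracket_def tsub_def tmul_diff_left tmul_assoc ay[symmetric])
  qed
qed

lemma length_mask_select_le: "length (mask_select m w) \<le> length w"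
  by (induct m w rule: mask_select.induct) auto

lemma sum_bool_lists_Suc:
  "(\<Sum>m\<in>{m::bool list. length m = Suc n}. f m) = (\<Sum>m\<in>{m. length m = n}. f (True # m) + f (False # m))"
proof -
  have e: "{m::bool list. length m = Suc n} = (\<lambda>(b, m). b # m) ` (UNIV \<times> {m. length m = n})"
    by (auto simp: length_Suc_conv image_iff)
  have i: "inj_on (\<lambda>(b, m). b # m) (UNIV \<times> {m::bool list. length m = n})"
    by (auto simp: inj_on_def)
  have fin: "finite {m::bool list. length m = n}"
    using finite_lists_length_eq[of "UNIV :: bool set" n] by simp
  have "(\<Sum>m\<in>{m::bool list. length m = Suc n}. f m) = (\<Sum>(b,m)\<in>UNIV \<times> {m. length m = n}. f (b # m))"
    unfolding e by (subst sum.reindex[OF i]) (simp add: split_def)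
  also have "\<dots> = (\<Sum>b\<in>UNIV. \<Sum>m\<in>{m. length m = n}. f (b # m))"
    by (simp add: sum.cartesian_product)
  also have "\<dots> = (\<Sum>m\<in>{m. length m = n}. f (True # m) + f (False # m))"
    by (simp add: UNIV_bool sum.distrib add.commute)
  finally show ?thesis .
qed

lemma finite_bool_lists[simp]: "finite {m::bool list. length m = n}"
  using finite_lists_length_eq[of "UNIV :: bool set" n] by simp

lemma sum_rbracket_word_vec:
  assumes k: "1 \<le> k"
  shows "length w \<le> k \<Longrightarrow>
    (\<lambda>u. \<Sum>m\<in>{m. length m = length w}. tmul k (rbracket k (mask_select m w)) (word_vec (mask_select (map Not m) w)) u)
     = (\<lambda>u. real (length w) * word_vec w u)"
proof (induct w)
  case Nil
  have "{m::bool list. length m = 0} = {[]}" by auto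
  then show ?case by (simp add: tzero_def tmul_zero_left)
next
  case (Cons a v)
  define T where "T m = tmul k (rbracket k (mask_select m v)) (word_vec (mask_select (map Not m) v))" for m
  have first_only: "(\<Sum>m\<in>{m. length m = length v}. if mask_select m v = [] then word_vec (a # mask_select (map Not m) v) u else 0)
      = word_vec (a # v) u" for u
  proof -
    have "(\<Sum>m\<in>{m. length m = length v}. if mask_select m v = [] then word_vec (a # mask_select (map Not m) v) u else 0)
        = (\<Sum>m\<in>{m. length m = length v}. if m = replicate (length v) False then word_vec (a # v) u else 0)"
      by (rule sum.cong) (auto simp: mask_select_eq_Nil_iff mask_select_replicate_True)
    then show ?thesis by simp
  qed
  have "(\<lambda>u. \<Sum>m\<in>{m. length m = length (a # v)}. tmul k (rbracket k (mask_select m (a # v))) (word_vec (mask_select (map Not m) (a # v))) u)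
      = (\<lambda>u. \<Sum>m\<in>{m. length m = length v}. tmul k (rbracket k (a # mask_select m v)) (word_vec (mask_select (map Not m) v)) u
          + tmul k (rbracket k (mask_select m v)) (word_vec (a # mask_select (map Not m) v)) u)"
    by (simp add: sum_bool_lists_Suc)
  also have "\<dots> = (\<lambda>u. \<Sum>m\<in>{m. length m = length v}.
      (if mask_select m v = [] then word_vec (a # mask_select (map Not m) v) u else 0) + tmul k (basis_vec a) (T m) u)"
    unfolding T_def using Cons.prems
    by (intro ext sum.cong refl tmul_rbracket_Cons_word_vec)
      (simp, metis Suc_le_mono le_trans length_mask_select_le)
  also have "\<dots> = (\<lambda>u. word_vec (a # v) u + tmul k (basis_vec a) (\<lambda>u. \<Sum>m\<in>{m. length m = length v}. T m u) u)"
    by (simp add: sum.distrib first_only tmul_sum_right)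
  also have "(\<lambda>u. \<Sum>m\<in>{m. length m = length v}. T m u) = (\<lambda>u. real (length v) * word_vec v u)"
    using Cons by (simp add: T_def)
  also have "tmul k (basis_vec a) (\<lambda>u. real (length v) * word_vec v u) = (\<lambda>u. real (length v) * word_vec (a # v) u)"
    using tmul_word_vec[of "[a]" v k] Cons.prems by (simp add: tmul_scale_right basis_vec_word_vec)
  finally show ?case by (simp add: algebra_simps)
qed

definition words :: "nat \<Rightarrow> nat \<Rightarrow> nat list set" where
  "words d n = {w. length w = n \<and> set w \<subseteq> {..<d}}"

lemma finite_words[simp]: "finite (words d n)"
  unfolding words_def using finite_lists_length_eq[of "{..<d}" n] by (simp add: conj_commute)

lemma mask_select_riffle:
  "length m = length x + length y \<Longrightarrow> count_true m = length x \<Longrightarrow> mask_select m (riffle m x y) = x"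
  "length m = length x + length y \<Longrightarrow> count_true m = length x \<Longrightarrow> mask_select (map Not m) (riffle m x y) = y"
proof (induct m arbitrary: x y)
  case Nil
  { case 1 then show ?case by simp }
  { case 2 then show ?case by simp }
next
  case (Cons b m)
  { case 1
    show ?case
    proof (cases b)
      case True
      with 1 obtain x0 x' where "x = x0 # x'" by (cases x) auto
      then show ?thesis using Cons.hyps(1)[of x' y] 1 True by auto
    next
      case False
      with 1 obtain y0 y' where "y = y0 # y'" using count_true_le[of m] by (cases y) auto
      then show ?thesis using Cons.hyps(1)[of x y'] 1 False by auto
    qed }
  { case 2
    show ?case
    proof (cases b)
      case True
      with 2 obtain x0 x' where "x = x0 # x'" by (cases x) auto
      then show ?thesis using Cons.hyps(2)[of x' y] 2 True by auto
    next
      case False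
      with 2 obtain y0 y' where "y = y0 # y'" using count_true_le[of m] by (cases y) auto
      then show ?thesis using Cons.hyps(2)[of x y'] 2 False by auto
    qed }
qed

lemma count_true_map_Not: "count_true (map Not m) = length m - count_true m"
proof (induct m)
  case (Cons a m)
  have "count_true m \<le> length m" by (rule count_true_le)
  then show ?case using Cons by (cases a) (auto simp: Suc_diff_le)
qed simp

lemma riffle_mask_select: "length m = length w \<Longrightarrow> riffle m (mask_select m w) (mask_select (map Not m) w) = w"
proof (induct m w rule: mask_select.induct)
  case (3 b m a w) then show ?case by (cases b) auto
qed auto

lemma length_mask_select: "length m = length w \<Longrightarrow> length (mask_select m w) = count_true m"
  by (induct m w rule: mask_select.induct) auto

lemma length_mask_select_Not: "length m = length w \<Longrightarrow> length (mask_select (map Not m) w) = length m - count_true m"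
proof (induct m w rule: mask_select.induct)
  case (3 b m a w)
  have "count_true m \<le> length m" by (rule count_true_le)
  then show ?case using 3 by auto
qed auto

lemma set_mask_select: "set (mask_select m w) \<subseteq> set w"
  by (induct m w rule: mask_select.induct) auto

lemma set_riffle: "length m = length x + length y \<Longrightarrow> count_true m = length x \<Longrightarrow> set (riffle m x y) \<subseteq> set x \<union> set y"
proof (induct m arbitrary: x y)
  case (Cons b m)
  show ?case
  proof (cases b)
    case True
    with Cons obtain x0 x' where "x = x0 # x'" by (cases x) auto
    then show ?thesis using Cons.hyps[of x' y] Cons.prems True by auto
  next
    case False
    with Cons obtain y0 y' where "y = y0 # y'" using count_true_le[of m] by (cases y) auto
    then show ?thesis using Cons.hyps[of x y'] Cons.prems False by auto
  qed
qed simp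

lemma sum_words_riffle:
  assumes m: "m \<in> riffle_masks i j"
  shows "(\<Sum>w\<in>words d (i + j). f (mask_select m w) (mask_select (map Not m) w) w)
       = (\<Sum>(x,y)\<in>words d i \<times> words d j. f x y (riffle m x y))"
proof (rule sum.reindex_bij_witness[where i = "\<lambda>(x,y). riffle m x y" and j = "\<lambda>w. (mask_select m w, mask_select (map Not m) w)"], goal_cases)
  case (1 w)
  then show ?case using m by (auto simp: riffle_masks_def words_def riffle_mask_select)
next
  case (2 w)
  then have lw: "length m = length w" using m by (simp add: riffle_masks_def words_def)
  show ?case using 2 m lw set_mask_select[of m w] set_mask_select[of "map Not m" w]
    by (auto simp: riffle_masks_def words_def length_mask_select length_mask_select_Not count_true_map_Not)
next
  case (3 b)
  then obtain x y where b: "b = (x, y)" "x \<in> words d i" "y \<in> words d j" by auto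
  then show ?case using m mask_select_riffle[of m x y] by (auto simp: riffle_masks_def words_def)
next
  case (4 b)
  then obtain x y where b: "b = (x, y)" "x \<in> words d i" "y \<in> words d j" by auto
  then show ?case using m set_riffle[of m x y] by (auto simp: riffle_masks_def words_def)
next
  case (5 w)
  then have "length m = length w" using m by (simp add: riffle_masks_def words_def)
  then show ?case by (simp add: riffle_mask_select)
qed

lemma sum_bool_lists_by_count:
  "(\<Sum>m\<in>{m::bool list. length m = n}. f m) = (\<Sum>i\<le>n. \<Sum>m\<in>riffle_masks i (n - i). f m)"
proof -
  have "(\<Sum>i\<le>n. \<Sum>m\<in>{m\<in>{m::bool list. length m = n}. count_true m = i}. f m) = (\<Sum>m\<in>{m::bool list. length m = n}. f m)"
    by (rule sum.group) (auto simp: count_true_le)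
  moreover have "{m\<in>{m::bool list. length m = n}. count_true m = i} = riffle_masks i (n - i)" if "i \<le> n" for i
    using that count_true_le by (auto simp: riffle_masks_def)
  ultimately show ?thesis by simp
qed

lemma words_0: "words d 0 = {[]}"
  by (auto simp: words_def)

lemma word_vec_Nil: "word_vec [] = tone"
  by (simp add: word_vec_def tone_def fun_eq_iff)

lemma sum_words_masks_eq_sum_shuffle_coeff:
  "(\<Sum>m\<in>{m. length m = n}. \<Sum>w\<in>words d n. p w * T (mask_select m w) (mask_select (map Not m) w))
     = (\<Sum>i\<le>n. \<Sum>(x,y)\<in>words d i \<times> words d (n - i). shuffle_coeff p x y * T x y)"
proof -
  have "(\<Sum>m\<in>{m. length m = n}. \<Sum>w\<in>words d n. p w * T (mask_select m w) (mask_select (map Not m) w))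
      = (\<Sum>i\<le>n. \<Sum>m\<in>riffle_masks i (n - i). \<Sum>w\<in>words d n. p w * T (mask_select m w) (mask_select (map Not m) w))"
    by (rule sum_bool_lists_by_count)
  also have "\<dots> = (\<Sum>i\<le>n. \<Sum>m\<in>riffle_masks i (n - i). \<Sum>(x,y)\<in>words d i \<times> words d (n - i). p (riffle m x y) * T x y)"
  proof (intro sum.cong[OF refl])
    fix i m assume i: "i \<in> {..n}" and m: "m \<in> riffle_masks i (n - i)"
    have "words d n = words d (i + (n - i))" using i by simp
    then show "(\<Sum>w\<in>words d n. p w * T (mask_select m w) (mask_select (map Not m) w)) =
        (\<Sum>(x,y)\<in>words d i \<times> words d (n - i). p (riffle m x y) * T x y)"
      using sum_words_riffle[OF m, where d=d and f="\<lambda>x y w. p w * T x y"] by simp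
  qed
  also have "\<dots> = (\<Sum>i\<le>n. \<Sum>(x,y)\<in>words d i \<times> words d (n - i). \<Sum>m\<in>riffle_masks i (n - i). p (riffle m x y) * T x y)"
    unfolding split_def by (intro sum.cong[OF refl] sum.swap)
  also have "\<dots> = (\<Sum>i\<le>n. \<Sum>(x,y)\<in>words d i \<times> words d (n - i). shuffle_coeff p x y * T x y)"
    by (intro sum.cong[OF refl]) (auto simp: shuffle_coeff_def words_def sum_distrib_right)
  finally show ?thesis .
qed

lemma dynkin_specht_wever:
  assumes k: "1 \<le> k" and p: "primitive k p" and pt: "p \<in> tensors d k"
    and hom: "\<And>w. p w \<noteq> 0 \<Longrightarrow> length w = n" and nk: "n \<le> k"
  shows "(\<lambda>u. \<Sum>w\<in>words d n. p w * rbracket k w u) = (\<lambda>u. real n * p u)"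
proof (rule ext)
  fix u
  define T where "T x y = tmul k (rbracket k x) (word_vec y) u" for x y
  have supp: "w \<in> words d n" if "p w \<noteq> 0" for w
    using that pt hom[OF that] by (auto simp: tensors_def words_def)
  have vanish: "shuffle_coeff p x y * T x y = 0"
    if "x \<in> words d i" "y \<in> words d (n - i)" "i < n" for i x y
  proof (cases "x = []")
    case True then show ?thesis by (simp add: T_def tzero_def tmul_zero_left)
  next
    case False
    moreover have "y \<noteq> []" "length x + length y \<le> k" using that nk by (auto simp: words_def)
    ultimately show ?thesis using p by (simp add: primitive_def)
  qed
  have "real n * p u = (\<Sum>w\<in>words d n. p w * (real n * word_vec w u))"
  proof -
    have "(\<Sum>w\<in>words d n. p w * (real n * word_vec w u)) = (\<Sum>w\<in>words d n. if w = u then real n * p u else 0)"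
      by (rule sum.cong) (auto simp: word_vec_def)
    also have "\<dots> = real n * p u"
      using supp[of u] by (auto simp: sum.delta)
    finally show ?thesis by simp
  qed
  also have "\<dots> = (\<Sum>w\<in>words d n. \<Sum>m\<in>{m. length m = n}. p w * T (mask_select m w) (mask_select (map Not m) w))"
  proof (rule sum.cong[OF refl])
    fix w assume "w \<in> words d n"
    then have "length w = n" by (simp add: words_def)
    then have "real n * word_vec w u = (\<Sum>m\<in>{m. length m = n}. T (mask_select m w) (mask_select (map Not m) w))"
      using fun_cong[OF sum_rbracket_word_vec[OF k, of w], of u] nk by (simp add: T_def)
    then show "p w * (real n * word_vec w u) = (\<Sum>m\<in>{m. length m = n}. p w * T (mask_select m w) (mask_select (map Not m) w))"
      by (simp add: sum_distrib_left)
  qed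
  also have "\<dots> = (\<Sum>i\<le>n. \<Sum>(x,y)\<in>words d i \<times> words d (n - i). shuffle_coeff p x y * T x y)"
    by (subst sum.swap) (rule sum_words_masks_eq_sum_shuffle_coeff)
  also have "\<dots> = (\<Sum>(x,y)\<in>words d n \<times> words d 0. shuffle_coeff p x y * T x y)"
    using vanish by (simp add: lessThan_Suc_atMost[symmetric] sum.neutral)
  also have "\<dots> = (\<Sum>w\<in>words d n. p w * rbracket k w u)"
    using levels_le_rbracket[OF k]
    by (simp add: words_0 sum.cartesian_product[symmetric] T_def word_vec_Nil tmul_tone_right)
  finally show "(\<Sum>w\<in>words d n. p w * rbracket k w u) = real n * p u" by simp
qed

lemma lie_alg_sum: "finite S \<Longrightarrow> (\<And>i. i \<in> S \<Longrightarrow> f i \<in> lie_alg d k) \<Longrightarrow> (\<lambda>w. \<Sum>i\<in>S. f i w) \<in> lie_alg d k"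
proof (induct S rule: finite_induct)
  case empty
  then show ?case using lie_alg.zero[of d k] by (simp add: tzero_def)
next
  case (insert x F)
  then have "tadd (f x) (\<lambda>w. \<Sum>i\<in>F. f i w) \<in> lie_alg d k" by (simp add: lie_alg.add)
  then show ?case using insert by (simp add: tadd_def)
qed

lemma lie_alg_mult: "a \<in> lie_alg d k \<Longrightarrow> (\<lambda>w. c * a w) \<in> lie_alg d k"
  using lie_alg.scale[of a d k c] by (simp add: tscale_def)

lemma rbracket_lie_alg: "set w \<subseteq> {..<d} \<Longrightarrow> rbracket k w \<in> lie_alg d k"
proof (induct k w rule: rbracket.induct)
  case (1 k) then show ?case by (simp add: lie_alg.zero)
next
  case (2 k a) then show ?case by (simp add: lie_alg.gen)
next
  case (3 k a b v) then show ?case by (simp add: lie_alg.gen lie_alg.bracket)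
qed

definition homog_part :: "nat \<Rightarrow> tensor \<Rightarrow> tensor" where
  "homog_part n p = (\<lambda>w. if length w = n then p w else 0)"

lemma shuffle_coeff_homog_part:
  "shuffle_coeff (homog_part n p) x y = (if length x + length y = n then shuffle_coeff p x y else 0)"
  unfolding shuffle_coeff_def homog_part_def by (auto simp: riffle_masks_def intro: sum.neutral sum.cong)

lemma primitive_homog_part:
  assumes "primitive k p"
  shows "primitive k (homog_part n p)"
  using assms by (simp add: primitive_def shuffle_coeff_homog_part) (simp add: homog_part_def)

lemma sum_homog_part:
  assumes "p [] = 0" and "p \<in> tensors d k"
  shows "(\<lambda>w. \<Sum>n\<in>{1..k}. homog_part n p w) = p"
proof (rule ext)
  fix w
  have "(\<Sum>n\<in>{1..k}. homog_part n p w) = (if length w \<in> {1..k} then p w else 0)"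
    by (simp add: homog_part_def sum.delta eq_commute[of _ "length w"])
  also have "\<dots> = p w"
    using assms by (cases w) (auto simp: tensors_def)
  finally show "(\<Sum>n\<in>{1..k}. homog_part n p w) = p w" .
qed

lemma homog_primitive_lie_alg:
  assumes k: "1 \<le> k" and p: "primitive k p" and pt: "p \<in> tensors d k" and n: "n \<in> {1..k}"
  shows "homog_part n p \<in> lie_alg d k"
proof -
  let ?h = "homog_part n p"
  have "(\<lambda>u. \<Sum>w\<in>words d n. ?h w * rbracket k w u) = (\<lambda>u. real n * ?h u)"
    by (rule dynkin_specht_wever[OF k primitive_homog_part[OF p]])
      (use n pt in \<open>auto simp: homog_part_def tensors_def split: if_splits\<close>)
  moreover have "(\<lambda>u. \<Sum>w\<in>words d n. ?h w * rbracket k w u) \<in> lie_alg d k"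
    by (rule lie_alg_sum[OF finite_words]) (auto simp: words_def intro: lie_alg_mult rbracket_lie_alg)
  ultimately have "(\<lambda>u. (1 / real n) * (real n * ?h u)) \<in> lie_alg d k"
    by (metis lie_alg_mult)
  then show ?thesis using n by simp
qed

lemma primitive_lie_alg:
  assumes k: "1 \<le> k" and p: "primitive k p" and pt: "p \<in> tensors d k"
  shows "p \<in> lie_alg d k"
proof -
  have "(\<lambda>w. \<Sum>n\<in>{1..k}. homog_part n p w) \<in> lie_alg d k"
    by (rule lie_alg_sum) (auto intro: homog_primitive_lie_alg[OF k p pt])
  then show ?thesis
    using sum_homog_part[OF _ pt] p by (simp add: primitive_def)
qed

section \<open>The free nilpotent group\<close>

lemma tensors_tmul: "a \<in> tensors d k' \<Longrightarrow> b \<in> tensors d k' \<Longrightarrow> tmul k a b \<in> tensors d k"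
  unfolding tensors_def
proof (intro CollectI allI impI)
  fix w
  assume a: "a \<in> {z. \<forall>w. z w \<noteq> 0 \<longrightarrow> length w \<le> k' \<and> set w \<subseteq> {..<d}}"
    and b: "b \<in> {z. \<forall>w. z w \<noteq> 0 \<longrightarrow> length w \<le> k' \<and> set w \<subseteq> {..<d}}"
    and w: "tmul k a b w \<noteq> 0"
  have lw: "length w \<le> k"
  proof (rule ccontr)
    assume "\<not> length w \<le> k"
    then show False using w by (simp add: tmul_apply_long)
  qed
  have "(\<Sum>i\<le>length w. a (take i w) * b (drop i w)) \<noteq> 0" using w lw by (simp add: tmul_apply)
  then obtain i where "i \<in> {..length w}" "a (take i w) * b (drop i w) \<noteq> 0"
    using sum.not_neutral_contains_not_neutral by blast
  then have "a (take i w) \<noteq> 0" "b (drop i w) \<noteq> 0" by auto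
  then have s1: "set (take i w) \<subseteq> {..<d}" and s2: "set (drop i w) \<subseteq> {..<d}" using a b by blast+
  have "set w = set (take i w) \<union> set (drop i w)"
    by (metis append_take_drop_id set_append)
  then have "set w \<subseteq> {..<d}" using s1 s2 by simp
  then show "length w \<le> k \<and> set w \<subseteq> {..<d}" using lw by simp
qed

lemma tensors_add: "a \<in> tensors d k \<Longrightarrow> b \<in> tensors d k \<Longrightarrow> (\<lambda>w. a w + b w) \<in> tensors d k"
  unfolding tensors_def
proof (intro CollectI allI impI)
  fix w assume a: "a \<in> {z. \<forall>w. z w \<noteq> 0 \<longrightarrow> length w \<le> k \<and> set w \<subseteq> {..<d}}"
    and b: "b \<in> {z. \<forall>w. z w \<noteq> 0 \<longrightarrow> length w \<le> k \<and> set w \<subseteq> {..<d}}"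
    and "a w + b w \<noteq> 0"
  then have "a w \<noteq> 0 \<or> b w \<noteq> 0" by auto
  then show "length w \<le> k \<and> set w \<subseteq> {..<d}" using a b by auto
qed

lemma tensors_scale: "a \<in> tensors d k \<Longrightarrow> (\<lambda>w. c * a w) \<in> tensors d k"
  by (auto simp: tensors_def)

lemma tensors_diff: "a \<in> tensors d k \<Longrightarrow> b \<in> tensors d k \<Longrightarrow> (\<lambda>w. a w - b w) \<in> tensors d k"
  using tensors_add[of a d k "\<lambda>w. (-1) * b w"] tensors_scale[of b d k "-1"] by simp

lemma tensors_sum: "finite S \<Longrightarrow> (\<And>i. i \<in> S \<Longrightarrow> f i \<in> tensors d k) \<Longrightarrow> (\<lambda>w. \<Sum>i\<in>S. f i w) \<in> tensors d k"
proof (induct S rule: finite_induct)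
  case empty then show ?case by (simp add: tensors_def)
next
  case (insert x F) then show ?case using tensors_add[of "f x" d k "\<lambda>w. \<Sum>i\<in>F. f i w"] by simp
qed

lemma lie_alg_tensors: assumes k: "1 \<le> k" shows "z \<in> lie_alg d k \<Longrightarrow> z \<in> tensors d k"
proof (induct z rule: lie_alg.induct)
  case (gen i) then show ?case
    using k by (auto simp: tensors_def basis_vec_def)
next
  case zero then show ?case by (simp add: tensors_def tzero_def)
next
  case (add a b) then show ?case unfolding tadd_def by (simp add: tensors_add)
next
  case (scale a c) then show ?case by (auto simp: tensors_def tscale_def)
next
  case (bracket a b)
  then have "tmul k a b \<in> tensors d k" "tmul k b a \<in> tensors d k" by (simp_all add: tensors_tmul)
  then show ?case unfolding tbracket_def tsub_def by (rule tensors_diff)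
qed

lemma tensors_tone: "tone \<in> tensors d k"
  by (simp add: tensors_def tone_def)

lemma tensors_tpow: "z \<in> tensors d k \<Longrightarrow> tpow k z n \<in> tensors d k"
  by (induct n) (simp_all add: tensors_tone tensors_tmul)

lemma tensors_fps_eval: "z \<in> tensors d k \<Longrightarrow> fps_eval k z f \<in> tensors d k"
  unfolding fps_eval_def by (rule tensors_sum) (auto intro: tensors_scale tensors_tpow)

lemma tensors_tsub_tone: "s \<in> tensors d k \<Longrightarrow> tsub s tone \<in> tensors d k"
  unfolding tsub_def by (rule tensors_diff[OF _ tensors_tone])

lemma tensors_texp: "z \<in> tensors d k \<Longrightarrow> texp k z \<in> tensors d k"
  by (simp add: texp_fps_eval tensors_fps_eval)

lemma tensors_tlog: "s \<in> tensors d k \<Longrightarrow> tlog k s \<in> tensors d k"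
  by (simp add: tlog_fps_eval tensors_fps_eval tensors_tsub_tone)

lemma tensors_levels_le: "z \<in> tensors d k \<Longrightarrow> levels_le k z"
  by (auto simp: tensors_def levels_le_def)

lemma lie_alg_levels_ge_1: "z \<in> lie_alg d k \<Longrightarrow> levels_ge 1 z"
  using lie_alg_primitive[of z d k] by (simp add: primitive_def)

lemma lie_alg_levels_le: "1 \<le> k \<Longrightarrow> z \<in> lie_alg d k \<Longrightarrow> levels_le k z"
  by (rule tensors_levels_le[OF lie_alg_tensors])

text \<open>Baker--Campbell--Hausdorff, via group-like and primitive elements.\<close>
lemma tlog_tmul_texp_lie_alg:
  assumes k: "1 \<le> k" and a: "a \<in> lie_alg d k" and b: "b \<in> lie_alg d k"
  shows "tlog k (tmul k (texp k a) (texp k b)) \<in> lie_alg d k"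
proof -
  have g: "group_like k (tmul k (texp k a) (texp k b))"
    by (rule group_like_tmul; rule group_like_texp; rule lie_alg_primitive) (use a b in auto)
  have t: "tmul k (texp k a) (texp k b) \<in> tensors d k"
    by (rule tensors_tmul; rule tensors_texp; rule lie_alg_tensors[OF k]) (use a b in auto)
  show ?thesis
    by (rule primitive_lie_alg[OF k]) (auto intro: primitive_tlog[OF k g] tensors_tlog[OF t])
qed

lemma grp_Nil: "m \<in> grp d k \<Longrightarrow> m [] = 1"
  by (auto simp: grp_def intro: texp_Nil lie_alg_levels_ge_1)

lemma grp_levels_le: "m \<in> grp d k \<Longrightarrow> levels_le k m"
  by (auto simp: grp_def texp_fps_eval)

lemma texp_grp: "a \<in> lie_alg d k \<Longrightarrow> texp k a \<in> grp d k"
  by (simp add: grp_def)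

lemma tlog_grp: assumes k: "1 \<le> k" and m: "m \<in> grp d k" shows "tlog k m \<in> lie_alg d k"
proof -
  obtain a where a: "a \<in> lie_alg d k" "m = texp k a" using m by (auto simp: grp_def)
  then show ?thesis using tlog_texp[OF k lie_alg_levels_ge_1[OF a(1)] lie_alg_levels_le[OF k a(1)]] by simp
qed

lemma texp_tlog_grp: assumes k: "1 \<le> k" and m: "m \<in> grp d k" shows "texp k (tlog k m) = m"
proof -
  obtain a where a: "a \<in> lie_alg d k" "m = texp k a" using m by (auto simp: grp_def)
  then show ?thesis using tlog_texp[OF k lie_alg_levels_ge_1[OF a(1)] lie_alg_levels_le[OF k a(1)]] by simp
qed

lemma tlog_eq_iff_texp:
  assumes k: "1 \<le> k" and g: "g \<in> grp d k" and a: "a \<in> lie_alg d k"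
  shows "tlog k g = a \<longleftrightarrow> g = texp k a"
proof
  assume "tlog k g = a"
  then show "g = texp k a" using texp_tlog_grp[OF k g] by simp
next
  assume "g = texp k a"
  then show "tlog k g = a"
    using tlog_texp[OF k lie_alg_levels_ge_1[OF a] lie_alg_levels_le[OF k a]] by simp
qed

lemma tmul_tinv_eq_iff:
  assumes k: "1 \<le> k" and m: "m [] = 1" "levels_le k m" and y: "levels_le k y" and z: "levels_le k z"
  shows "tmul k (tinv k m) y = z \<longleftrightarrow> y = tmul k m z"
proof
  assume "tmul k (tinv k m) y = z"
  then have "tmul k m z = tmul k (tmul k m (tinv k m)) y" by (simp add: tmul_assoc)
  also have "\<dots> = y" using tmul_tinv(2)[OF k m] y by (simp add: tmul_tone_left)
  finally show "y = tmul k m z" by simp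
next
  assume "y = tmul k m z"
  then have "tmul k (tinv k m) y = tmul k (tmul k (tinv k m) m) z" by (simp add: tmul_assoc)
  also have "\<dots> = z" using tmul_tinv(1)[OF k m] z by (simp add: tmul_tone_left)
  finally show "tmul k (tinv k m) y = z" .
qed

lemma tmul_grp:
  assumes k: "1 \<le> k" and m: "m \<in> grp d k" and m': "m' \<in> grp d k"
  shows "tmul k m m' \<in> grp d k"
proof -
  obtain a b where a: "a \<in> lie_alg d k" "m = texp k a" and b: "b \<in> lie_alg d k" "m' = texp k b"
    using m m' by (auto simp: grp_def)
  have l: "tlog k (tmul k m m') \<in> lie_alg d k" using tlog_tmul_texp_lie_alg[OF k a(1) b(1)] a b by simp
  have "(tmul k m m') [] = 1" using grp_Nil[OF m] grp_Nil[OF m'] by (simp add: tmul_def)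
  then have "texp k (tlog k (tmul k m m')) = tmul k m m'"
    by (rule texp_tlog[OF k]) simp
  then show ?thesis using texp_grp[OF l] by simp
qed

lemma tinv_texp:
  assumes k: "1 \<le> k" and a1: "levels_ge 1 a" and ac: "levels_le k a"
  shows "tinv k (texp k a) = texp k (tscale (-1) a)"
proof -
  define m where "m = texp k a"
  define m' where "m' = texp k (tscale (-1) a)"
  have m0: "m [] = 1" using texp_Nil[OF a1] by (simp add: m_def)
  have mc: "levels_le k m" by (simp add: m_def texp_fps_eval)
  have m'c: "levels_le k m'" by (simp add: m'_def texp_fps_eval)
  have ic: "levels_le k (tinv k m)" by (simp add: tinv_fps_eval)
  have "tinv k m = tmul k (tinv k m) tone" using ic by (simp add: tmul_tone_right)
  also have "\<dots> = tmul k (tinv k m) (tmul k m m')"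
    using tmul_texp_texp_neg[OF k a1 ac] by (simp add: m_def m'_def)
  also have "\<dots> = tmul k (tmul k (tinv k m) m) m'" by (simp add: tmul_assoc)
  also have "\<dots> = m'" using tmul_tinv(1)[OF k m0 mc] m'c by (simp add: tmul_tone_left)
  finally show ?thesis by (simp add: m_def m'_def)
qed

lemma tinv_grp:
  assumes k: "1 \<le> k" and m: "m \<in> grp d k"
  shows "tinv k m \<in> grp d k"
proof -
  obtain a where a: "a \<in> lie_alg d k" "m = texp k a" using m by (auto simp: grp_def)
  then show ?thesis using tinv_texp[OF k lie_alg_levels_ge_1[OF a(1)] lie_alg_levels_le[OF k a(1)]]
    by (simp add: texp_grp lie_alg.scale)
qed

lemma tlog_tmul_tinv_lie_alg:
  assumes k: "1 \<le> k" and m: "m \<in> grp d k" and x: "x \<in> grp d k"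
  shows "tlog k (tmul k (tinv k m) x) \<in> lie_alg d k"
  using tlog_grp[OF k tmul_grp[OF k tinv_grp[OF k m] x]] .

section \<open>Agreement up to a level\<close>

definition agree_upto :: "nat \<Rightarrow> tensor \<Rightarrow> tensor \<Rightarrow> bool" where
  "agree_upto n f g \<longleftrightarrow> (\<forall>w. length w \<le> n \<longrightarrow> f w = g w)"

lemma agree_upto_refl[simp]: "agree_upto n f f" by (simp add: agree_upto_def)
lemma agree_upto_trans: "agree_upto n f g \<Longrightarrow> agree_upto n g h \<Longrightarrow> agree_upto n f h" by (simp add: agree_upto_def)
declare agree_upto_trans[trans]

lemma agree_upto_tmul:
  assumes "agree_upto n a a'" "agree_upto n b b'"
  shows "agree_upto n (tmul k a b) (tmul k a' b')"
  unfolding agree_upto_def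
proof (intro allI impI)
  fix w :: "nat list" assume w: "length w \<le> n"
  show "tmul k a b w = tmul k a' b' w"
  proof (cases "length w \<le> k")
    case True
    show ?thesis unfolding tmul_apply[OF True]
      by (rule sum.cong[OF refl]) (use assms w in \<open>auto simp: agree_upto_def\<close>)
  qed (simp add: tmul_def)
qed

lemma agree_upto_tpow: "agree_upto n z z' \<Longrightarrow> agree_upto n (tpow k z l) (tpow k z' l)"
  by (induct l) (simp_all add: agree_upto_tmul)

lemma agree_upto_fps_eval: "agree_upto n z z' \<Longrightarrow> agree_upto n (fps_eval k z f) (fps_eval k z' f)"
  using agree_upto_tpow[of n z z' k] by (auto simp: agree_upto_def fps_eval_def intro!: sum.cong)

lemma agree_upto_tsub: "agree_upto n a a' \<Longrightarrow> agree_upto n b b' \<Longrightarrow> agree_upto n (tsub a b) (tsub a' b')"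
  by (simp add: agree_upto_def tsub_def)

lemma agree_upto_tlog: "agree_upto n z z' \<Longrightarrow> agree_upto n (tlog k z) (tlog k z')"
  by (simp add: tlog_fps_eval agree_upto_fps_eval agree_upto_tsub)

lemma agree_upto_tinv: "agree_upto n z z' \<Longrightarrow> agree_upto n (tinv k z) (tinv k z')"
  by (simp add: tinv_fps_eval agree_upto_fps_eval agree_upto_tsub)

lemma agree_upto_sum: "(\<And>i. i \<in> S \<Longrightarrow> agree_upto n (f i) (g i)) \<Longrightarrow> agree_upto n (\<lambda>w. \<Sum>i\<in>S. f i w) (\<lambda>w. \<Sum>i\<in>S. g i w)"
  by (auto simp: agree_upto_def intro!: sum.cong)

lemma agree_upto_add_levels_ge: "levels_ge (Suc n) e \<Longrightarrow> agree_upto n (\<lambda>w. f w + e w) f"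
  by (auto simp: agree_upto_def levels_ge_def)

lemma agree_upto_levels_le_eq:
  assumes "agree_upto k f g" and "levels_le k f" and "levels_le k g"
  shows "f = g"
proof (rule ext)
  fix w show "f w = g w"
    using assms by (cases "length w \<le> k") (auto simp: agree_upto_def levels_le_def)
qed

text \<open>Every product of \<delta> with a or \<delta> starts above level n.\<close>
lemma tpow_perturb:
  assumes a: "levels_ge 1 a" and dl: "levels_ge n \<delta>" and n: "1 \<le> n" and dc: "levels_le k \<delta>"
  shows "agree_upto n (tpow k (\<lambda>w. a w + \<delta> w) l) (\<lambda>w. tpow k a l w + (if l = 1 then \<delta> w else 0))"
proof (induct l)
  case 0 then show ?case by simp
next
  case (Suc l)
  show ?case
  proof (cases "l = 0")
    case True
    have "tpow k (\<lambda>w. a w + \<delta> w) (Suc l) = (\<lambda>w. tpow k a (Suc l) w + \<delta> w)"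
      using True dc by (auto simp: tmul_tone_right truncate_def levels_le_def fun_eq_iff)
    then show ?thesis using True by simp
  next
    case False
    then obtain l' where lS: "l = Suc l'" by (cases l) auto
    define T where "T = tpow k a l"
    define c where "c = (if l = 1 then 1 else (0::real))"
    have eqv: "(\<lambda>w. tpow k a l w + (if l = 1 then \<delta> w else 0)) = (\<lambda>w. T w + c * \<delta> w)"
      by (simp add: T_def c_def fun_eq_iff)
    have IH: "agree_upto n (tpow k (\<lambda>w. a w + \<delta> w) l) (\<lambda>w. T w + c * \<delta> w)"
      using Suc.hyps unfolding eqv .
    have "agree_upto n (tpow k (\<lambda>w. a w + \<delta> w) (Suc l)) (tmul k (\<lambda>w. a w + \<delta> w) (\<lambda>w. T w + c * \<delta> w))"
      using agree_upto_tmul[OF agree_upto_refl IH] by simp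
    also have "tmul k (\<lambda>w. a w + \<delta> w) (\<lambda>w. T w + c * \<delta> w) =
        (\<lambda>w. tmul k a T w + (c * tmul k a \<delta> w + tmul k \<delta> T w + c * tmul k \<delta> \<delta> w))"
      by (simp add: tmul_add_left tmul_add_right tmul_scale_right fun_eq_iff algebra_simps)
    also have "agree_upto n \<dots> (tmul k a T)"
    proof (rule agree_upto_add_levels_ge)
      have l1: "levels_ge (Suc n) (tmul k a \<delta>)" using levels_ge_tmul[OF a dl, of k] by simp
      have "levels_ge l T" unfolding T_def by (rule levels_ge_tpow[OF a])
      then have "levels_ge 1 T" using lS levels_ge_mono[of l T 1] by simp
      then have l2: "levels_ge (Suc n) (tmul k \<delta> T)" using levels_ge_tmul[OF dl, of 1 T k] by simp
      have l3: "levels_ge (Suc n) (tmul k \<delta> \<delta>)" using levels_ge_tmul[OF dl dl, of k] n levels_ge_mono by fastforce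
      show "levels_ge (Suc n) (\<lambda>w. c * tmul k a \<delta> w + tmul k \<delta> T w + c * tmul k \<delta> \<delta> w)"
        using l1 l2 l3 by (simp add: levels_ge_def)
    qed
    finally show ?thesis using lS by (simp add: T_def agree_upto_def)
  qed
qed

lemma fps_eval_perturb:
  assumes k: "1 \<le> k" and a: "levels_ge 1 a" and dl: "levels_ge n \<delta>" and n: "1 \<le> n" and dc: "levels_le k \<delta>"
  shows "agree_upto n (fps_eval k (\<lambda>w. a w + \<delta> w) f) (\<lambda>w. fps_eval k a f w + f $ 1 * \<delta> w)"
  unfolding agree_upto_def
proof (intro allI impI)
  fix w :: "nat list" assume w: "length w \<le> n"
  have "fps_eval k (\<lambda>w. a w + \<delta> w) f w = (\<Sum>l\<le>k. f $ l * (tpow k a l w + (if l = 1 then \<delta> w else 0)))"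
    unfolding fps_eval_def using tpow_perturb[OF a dl n dc] w by (auto simp: agree_upto_def intro!: sum.cong)
  also have "\<dots> = fps_eval k a f w + (\<Sum>l\<le>k. if l = 1 then f $ l * \<delta> w else 0)"
    by (simp add: fps_eval_def distrib_left sum.distrib if_distrib[of "\<lambda>x. _ * x"] cong: if_cong)
  also have "\<dots> = fps_eval k a f w + f $ 1 * \<delta> w" using k by simp
  finally show "fps_eval k (\<lambda>w. a w + \<delta> w) f w = fps_eval k a f w + f $ 1 * \<delta> w" .
qed

lemma texp_perturb:
  assumes k: "1 \<le> k" and a: "levels_ge 1 a" and dl: "levels_ge n \<delta>" and n: "1 \<le> n" and dc: "levels_le k \<delta>"
  shows "agree_upto n (texp k (\<lambda>w. a w + \<delta> w)) (\<lambda>w. texp k a w + \<delta> w)"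
  using fps_eval_perturb[OF k a dl n dc, of exp_series] by (simp add: texp_fps_eval)

lemma tlog_perturb:
  assumes k: "1 \<le> k" and s: "s [] = 1" and dl: "levels_ge n \<delta>" and n: "1 \<le> n" and dc: "levels_le k \<delta>"
  shows "agree_upto n (tlog k (\<lambda>w. s w + \<delta> w)) (\<lambda>w. tlog k s w + \<delta> w)"
proof -
  have e: "tsub (\<lambda>w. s w + \<delta> w) tone = (\<lambda>w. tsub s tone w + \<delta> w)"
    by (simp add: tsub_def fun_eq_iff)
  have a: "levels_ge 1 (tsub s tone)" using s by (simp add: tsub_def tone_def)
  show ?thesis using fps_eval_perturb[OF k a dl n dc, of log_series] by (simp add: tlog_fps_eval e fps_ln_nth)
qed

lemma tinv_perturb:
  assumes k: "1 \<le> k" and m: "m [] = 1" and dl: "levels_ge n \<delta>" and n: "1 \<le> n" and dc: "levels_le k \<delta>"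
  shows "agree_upto n (tinv k (\<lambda>w. m w + \<delta> w)) (\<lambda>w. tinv k m w - \<delta> w)"
proof -
  have e: "tsub tone (\<lambda>w. m w + \<delta> w) = (\<lambda>w. tsub tone m w + (- \<delta> w))"
    by (simp add: tsub_def fun_eq_iff)
  have a: "levels_ge 1 (tsub tone m)" using m by (simp add: tsub_def tone_def)
  have dl': "levels_ge n (\<lambda>w. - \<delta> w)" using dl by (simp add: levels_ge_def)
  have dc': "levels_le k (\<lambda>w. - \<delta> w)" using dc by (simp add: levels_le_def)
  show ?thesis using fps_eval_perturb[OF k a dl' n dc', of geometric_series] by (simp add: tinv_fps_eval e)
qed

lemma tmul_levels_ge_left:
  assumes dl: "levels_ge n \<delta>" and dc: "levels_le k \<delta>" and x: "x [] = 1"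
  shows "agree_upto n (tmul k \<delta> x) \<delta>"
  unfolding agree_upto_def
proof (intro allI impI)
  fix w :: "nat list" assume w: "length w \<le> n"
  show "tmul k \<delta> x w = \<delta> w"
  proof (cases "length w \<le> k")
    case True
    have "tmul k \<delta> x w = (\<Sum>i\<le>length w. if i = length w then \<delta> w else 0)"
      unfolding tmul_apply[OF True]
    proof (rule sum.cong[OF refl])
      fix i assume i: "i \<in> {..length w}"
      show "\<delta> (take i w) * x (drop i w) = (if i = length w then \<delta> w else 0)"
      proof (cases "i = length w")
        case True then show ?thesis using x by simp
      next
        case False
        then have "length (take i w) < n" using i w by auto
        then show ?thesis using dl False by (simp add: levels_ge_def)
      qed
    qed
    then show ?thesis by simp
  next
    case False then show ?thesis using dc by (simp add: tmul_def levels_le_def)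
  qed
qed

definition log_residual :: "nat \<Rightarrow> nat \<Rightarrow> (nat \<Rightarrow> tensor) \<Rightarrow> tensor \<Rightarrow> tensor" where
  "log_residual k N xs m = (\<lambda>w. \<Sum>i<N. tlog k (tmul k (tinv k m) (xs i)) w)"

lemma tlog_tmul_tinv_texp_perturb:
  assumes k: "1 \<le> k" and mu: "levels_ge 1 \<mu>" and dl: "levels_ge n \<delta>" and n: "1 \<le> n"
    and dc: "levels_le k \<delta>" and x: "x [] = 1"
  shows "agree_upto n (tlog k (tmul k (tinv k (texp k (\<lambda>w. \<mu> w + \<delta> w))) x))
    (\<lambda>w. tlog k (tmul k (tinv k (texp k \<mu>)) x) w - \<delta> w)"
proof -
  define m where "m = texp k \<mu>"
  have m0: "m [] = 1" using texp_Nil[OF mu] by (simp add: m_def)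
  have mc: "levels_le k m" by (simp add: m_def texp_fps_eval)
  have "agree_upto n (tinv k (texp k (\<lambda>w. \<mu> w + \<delta> w))) (tinv k (\<lambda>w. m w + \<delta> w))"
    by (rule agree_upto_tinv) (use texp_perturb[OF k mu dl n dc] in \<open>simp add: m_def\<close>)
  also have "agree_upto n \<dots> (\<lambda>w. tinv k m w - \<delta> w)"
    by (rule tinv_perturb[where m = m and \<delta> = \<delta>, OF k m0 dl n dc])
  finally have "agree_upto n (tmul k (tinv k (texp k (\<lambda>w. \<mu> w + \<delta> w))) x)
      (tmul k (\<lambda>w. tinv k m w - \<delta> w) x)"
    by (rule agree_upto_tmul[OF _ agree_upto_refl])
  also have "tmul k (\<lambda>w. tinv k m w - \<delta> w) x = (\<lambda>w. tmul k (tinv k m) x w - tmul k \<delta> x w)"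
    by (simp add: tmul_diff_left)
  also have "agree_upto n \<dots> (\<lambda>w. tmul k (tinv k m) x w + (- \<delta> w))"
    using tmul_levels_ge_left[where \<delta> = \<delta> and x = x, OF dl dc x] by (simp add: agree_upto_def)
  finally have "agree_upto n (tlog k (tmul k (tinv k (texp k (\<lambda>w. \<mu> w + \<delta> w))) x))
      (tlog k (\<lambda>w. tmul k (tinv k m) x w + (- \<delta> w)))"
    by (rule agree_upto_tlog)
  also have "agree_upto n \<dots> (\<lambda>w. tlog k (tmul k (tinv k m) x) w + (- \<delta> w))"
  proof (rule tlog_perturb[OF k])
    have "tinv k m [] = 1"
      using fun_cong[OF tmul_tinv(1)[OF k m0 mc], of "[]"] m0 by (simp add: tmul_def tone_def)
    then show "tmul k (tinv k m) x [] = 1" using x by (simp add: tmul_def)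
  qed (use dl dc n in \<open>simp_all add: levels_ge_def levels_le_def\<close>)
  finally show ?thesis by (simp add: agree_upto_def m_def)
qed

lemma log_residual_perturb:
  assumes k: "1 \<le> k" and mu: "levels_ge 1 \<mu>" and dl: "levels_ge n \<delta>" and n: "1 \<le> n" and dc: "levels_le k \<delta>"
    and xs: "\<And>i. i < N \<Longrightarrow> xs i [] = 1"
  shows "agree_upto n (log_residual k N xs (texp k (\<lambda>w. \<mu> w + \<delta> w))) (\<lambda>w. log_residual k N xs (texp k \<mu>) w - real N * \<delta> w)"
proof -
  have "agree_upto n (log_residual k N xs (texp k (\<lambda>w. \<mu> w + \<delta> w)))
      (\<lambda>w. \<Sum>i<N. tlog k (tmul k (tinv k (texp k \<mu>)) (xs i)) w - \<delta> w)"
    unfolding log_residual_def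
  proof (rule agree_upto_sum)
    fix i assume "i \<in> {..<N}"
    then show "agree_upto n (tlog k (tmul k (tinv k (texp k (\<lambda>w. \<mu> w + \<delta> w))) (xs i)))
        (\<lambda>w. tlog k (tmul k (tinv k (texp k \<mu>)) (xs i)) w - \<delta> w)"
      by (intro tlog_tmul_tinv_texp_perturb[OF k mu dl n dc]) (simp add: xs)
  qed
  then show ?thesis by (simp add: log_residual_def sum_subtractf)
qed

section \<open>The barycenter as a fixed point\<close>

text \<open>Each step adds the averaged residual. By log_residual_perturb this cancels the residual
  one more level up, so after k steps the residual vanishes.\<close>
primrec bary_iter :: "nat \<Rightarrow> nat \<Rightarrow> (nat \<Rightarrow> tensor) \<Rightarrow> nat \<Rightarrow> tensor" where
  "bary_iter k N xs 0 = tzero"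
| "bary_iter k N xs (Suc j) = (\<lambda>w. bary_iter k N xs j w + (1 / real N) * log_residual k N xs (texp k (bary_iter k N xs j)) w)"

lemma log_residual_lie_alg:
  assumes k: "1 \<le> k" and xs: "\<And>i. i < N \<Longrightarrow> xs i \<in> grp d k" and m: "m \<in> grp d k"
  shows "log_residual k N xs m \<in> lie_alg d k"
  unfolding log_residual_def by (rule lie_alg_sum) (auto intro: tlog_tmul_tinv_lie_alg[OF k m] xs)

lemma levels_le_log_residual: "levels_le k (log_residual k N xs m)"
  by (simp add: log_residual_def levels_le_def tlog_fps_eval fps_eval_def levels_le_tpow[unfolded levels_le_def])

lemma bary_iter_lie_alg_residual:
  assumes k: "1 \<le> k" and N: "1 \<le> N" and xs: "\<And>i. i < N \<Longrightarrow> xs i \<in> grp d k"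
  shows "bary_iter k N xs j \<in> lie_alg d k \<and> agree_upto j (log_residual k N xs (texp k (bary_iter k N xs j))) tzero"
proof (induct j)
  case 0
  have z: "tzero \<in> lie_alg d k" by (rule lie_alg.zero)
  have "log_residual k N xs (texp k tzero) \<in> lie_alg d k" by (rule log_residual_lie_alg[OF k xs texp_grp[OF z]])
  then have "log_residual k N xs (texp k tzero) [] = 0" using lie_alg_levels_ge_1 by simp
  then show ?case using z by (simp add: agree_upto_def tzero_def)
next
  case (Suc j)
  define \<mu> where "\<mu> = bary_iter k N xs j"
  define \<delta> where "\<delta> = (\<lambda>w. (1 / real N) * log_residual k N xs (texp k \<mu>) w)"
  have mu: "\<mu> \<in> lie_alg d k" and e: "agree_upto j (log_residual k N xs (texp k \<mu>)) tzero" using Suc by (simp_all add: \<mu>_def)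
  have Fl: "log_residual k N xs (texp k \<mu>) \<in> lie_alg d k" by (rule log_residual_lie_alg[OF k xs texp_grp[OF mu]])
  have dlie: "\<delta> \<in> lie_alg d k" unfolding \<delta>_def by (rule lie_alg_mult[OF Fl])
  have dl: "levels_ge (Suc j) \<delta>" using e by (auto simp: levels_ge_def agree_upto_def \<delta>_def tzero_def)
  have dc: "levels_le k \<delta>" by (rule lie_alg_levels_le[OF k dlie])
  have it: "bary_iter k N xs (Suc j) = (\<lambda>w. \<mu> w + \<delta> w)" by (simp add: \<mu>_def \<delta>_def)
  have l1: "bary_iter k N xs (Suc j) \<in> lie_alg d k"
    using lie_alg.add[OF mu dlie] it by (simp add: tadd_def)
  have xs0: "\<And>i. i < N \<Longrightarrow> xs i [] = 1" using xs grp_Nil by blast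
  have "agree_upto (Suc j) (log_residual k N xs (texp k (\<lambda>w. \<mu> w + \<delta> w))) (\<lambda>w. log_residual k N xs (texp k \<mu>) w - real N * \<delta> w)"
    by (rule log_residual_perturb[where \<mu>=\<mu> and \<delta>=\<delta> and xs=xs, OF k lie_alg_levels_ge_1[OF mu] dl _ dc xs0]) simp_all
  moreover have "(\<lambda>w. log_residual k N xs (texp k \<mu>) w - real N * \<delta> w) = tzero"
    using N by (simp add: \<delta>_def tzero_def fun_eq_iff)
  ultimately show ?case using l1 it by simp
qed

definition bary_solution :: "nat \<Rightarrow> nat \<Rightarrow> (nat \<Rightarrow> tensor) \<Rightarrow> tensor" where
  "bary_solution k N xs = texp k (bary_iter k N xs k)"

lemma bary_solution_grp_residual:
  assumes k: "1 \<le> k" and N: "1 \<le> N" and xs: "\<And>i. i < N \<Longrightarrow> xs i \<in> grp d k"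
  shows "bary_solution k N xs \<in> grp d k \<and> log_residual k N xs (bary_solution k N xs) = tzero"
proof -
  have "bary_iter k N xs k \<in> lie_alg d k"
    and "agree_upto k (log_residual k N xs (bary_solution k N xs)) tzero"
    using bary_iter_lie_alg_residual[OF k N xs] by (auto simp: bary_solution_def)
  moreover have "levels_le k tzero" by (simp add: levels_le_def tzero_def)
  ultimately show ?thesis
    using agree_upto_levels_le_eq levels_le_log_residual texp_grp by (auto simp: bary_solution_def)
qed

lemma bary_solution_unique:
  assumes k: "1 \<le> k" and N: "1 \<le> N" and xs: "\<And>i. i < N \<Longrightarrow> xs i \<in> grp d k"
    and m: "m \<in> grp d k" and F: "log_residual k N xs m = tzero"
  shows "m = bary_solution k N xs"
proof -
  define \<mu> where "\<mu> = bary_iter k N xs k"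
  have mu: "\<mu> \<in> lie_alg d k" using bary_iter_lie_alg_residual[OF k N xs] by (simp add: \<mu>_def)
  have F0: "log_residual k N xs (texp k \<mu>) = tzero"
    using bary_solution_grp_residual[OF k N xs] by (simp add: bary_solution_def \<mu>_def)
  obtain \<nu> where nu: "\<nu> \<in> lie_alg d k" "m = texp k \<nu>" using m by (auto simp: grp_def)
  define \<delta> where "\<delta> = (\<lambda>w. \<nu> w - \<mu> w)"
  have dc: "levels_le k \<delta>"
    using lie_alg_levels_le[OF k mu] lie_alg_levels_le[OF k nu(1)] by (simp add: \<delta>_def levels_le_def)
  have nd: "\<nu> = (\<lambda>w. \<mu> w + \<delta> w)" by (simp add: \<delta>_def)
  have xs0: "\<And>i. i < N \<Longrightarrow> xs i [] = 1" using xs grp_Nil by blast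
  have "levels_ge (Suc n) \<delta>" for n
  proof (induct n)
    case 0 then show ?case using lie_alg_levels_ge_1[OF mu] lie_alg_levels_ge_1[OF nu(1)] by (simp add: \<delta>_def)
  next
    case (Suc n)
    have "agree_upto (Suc n) (log_residual k N xs (texp k (\<lambda>w. \<mu> w + \<delta> w)))
        (\<lambda>w. log_residual k N xs (texp k \<mu>) w - real N * \<delta> w)"
      by (rule log_residual_perturb[where \<mu>=\<mu> and \<delta>=\<delta> and xs=xs, OF k lie_alg_levels_ge_1[OF mu] Suc _ dc xs0])
        simp_all
    then have "agree_upto (Suc n) tzero (\<lambda>w. 0 - real N * \<delta> w)"
      using F F0 nu(2) nd by (simp add: tzero_def)
    then show ?case using N Suc by (auto simp: agree_upto_def levels_ge_def tzero_def less_Suc_eq_le)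
  qed
  then have "agree_upto k \<delta> tzero" by (auto simp: agree_upto_def levels_ge_def tzero_def)
  then have "\<delta> = tzero" by (rule agree_upto_levels_le_eq[OF _ dc]) (simp add: levels_le_def tzero_def)
  then show ?thesis using nu nd by (simp add: bary_solution_def \<mu>_def tzero_def)
qed

lemma the_bary_solution:
  assumes k: "1 \<le> k" and N: "1 \<le> N" and xs: "\<And>i. i < N \<Longrightarrow> xs i \<in> grp d k"
  shows "(THE m. m \<in> grp d k \<and> log_residual k N xs m = tzero) = bary_solution k N xs"
  by (rule the_equality) (use bary_solution_grp_residual[OF k N xs] bary_solution_unique[OF k N xs] in auto)

lemma bary_solution_iff:
  assumes k: "1 \<le> k" and N: "1 \<le> N" and xs: "\<And>i. i < N \<Longrightarrow> xs i \<in> grp d k"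
    and m: "m \<in> grp d k"
  shows "bary_solution k N xs = m \<longleftrightarrow> log_residual k N xs m = tzero"
proof
  assume "bary_solution k N xs = m"
  then show "log_residual k N xs m = tzero" using bary_solution_grp_residual[where xs = xs, OF k N xs] by simp
next
  assume "log_residual k N xs m = tzero"
  then show "bary_solution k N xs = m" using bary_solution_unique[where xs = xs, OF k N xs m] by simp
qed

section \<open>Polynomial maps\<close>

lemma polyfun_sum: "finite S \<Longrightarrow> (\<And>i. i \<in> S \<Longrightarrow> f i \<in> polyfun) \<Longrightarrow> (\<lambda>x. \<Sum>i\<in>S. f i x) \<in> polyfun"
proof (induct S rule: finite_induct)
  case empty then show ?case using polyfun.const[of 0] by simp
next
  case (insert a F)
  then show ?case using polyfun.add[of "f a" "\<lambda>x. \<Sum>i\<in>F. f i x"] by simp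
qed

lemma polyfun_scale: "p \<in> polyfun \<Longrightarrow> (\<lambda>x. c * p x) \<in> polyfun"
  using polyfun.mult[OF polyfun.const[of c]] by blast

lemma polyfun_diff: "p \<in> polyfun \<Longrightarrow> q \<in> polyfun \<Longrightarrow> (\<lambda>x. p x - q x) \<in> polyfun"
  using polyfun.add[of p "\<lambda>x. (-1) * q x"] polyfun_scale[of q "-1"] by simp

definition poly_tensor :: "(('v \<Rightarrow> real) \<Rightarrow> tensor) \<Rightarrow> bool" where
  "poly_tensor F \<longleftrightarrow> (\<forall>w. (\<lambda>x. F x w) \<in> polyfun)"

lemma poly_tensor_const: "poly_tensor (\<lambda>x. c)"
  by (simp add: poly_tensor_def polyfun.const)

lemma poly_tensor_add: "poly_tensor F \<Longrightarrow> poly_tensor G \<Longrightarrow> poly_tensor (\<lambda>x w. F x w + G x w)"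
  by (simp add: poly_tensor_def polyfun.add)

lemma poly_tensor_diff: "poly_tensor F \<Longrightarrow> poly_tensor G \<Longrightarrow> poly_tensor (\<lambda>x w. F x w - G x w)"
  by (simp add: poly_tensor_def polyfun_diff)

lemma poly_tensor_scale: "poly_tensor F \<Longrightarrow> poly_tensor (\<lambda>x w. c * F x w)"
  by (simp add: poly_tensor_def polyfun_scale)

lemma poly_tensor_sum: "finite S \<Longrightarrow> (\<And>i. i \<in> S \<Longrightarrow> poly_tensor (F i)) \<Longrightarrow> poly_tensor (\<lambda>x w. \<Sum>i\<in>S. F i x w)"
  by (simp add: poly_tensor_def polyfun_sum)

lemma poly_tensor_tmul: "poly_tensor F \<Longrightarrow> poly_tensor G \<Longrightarrow> poly_tensor (\<lambda>x. tmul k (F x) (G x))"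
  unfolding poly_tensor_def
proof (intro allI)
  fix w assume F: "\<forall>w. (\<lambda>x. F x w) \<in> polyfun" and G: "\<forall>w. (\<lambda>x. G x w) \<in> polyfun"
  show "(\<lambda>x. tmul k (F x) (G x) w) \<in> polyfun"
  proof (cases "length w \<le> k")
    case True
    show ?thesis unfolding tmul_apply[OF True]
      by (rule polyfun_sum) (auto intro: polyfun.mult F[rule_format] G[rule_format])
  next
    case False then show ?thesis by (simp add: tmul_def polyfun.const)
  qed
qed

lemma poly_tensor_tpow: "poly_tensor F \<Longrightarrow> poly_tensor (\<lambda>x. tpow k (F x) n)"
  by (induct n) (simp_all add: poly_tensor_const poly_tensor_tmul)

lemma poly_tensor_fps_eval: "poly_tensor F \<Longrightarrow> poly_tensor (\<lambda>x. fps_eval k (F x) f)"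
  unfolding fps_eval_def by (rule poly_tensor_sum) (auto intro: poly_tensor_scale poly_tensor_tpow)

lemma poly_tensor_tsub: "poly_tensor F \<Longrightarrow> poly_tensor G \<Longrightarrow> poly_tensor (\<lambda>x. tsub (F x) (G x))"
  unfolding tsub_def by (rule poly_tensor_diff)

lemma poly_tensor_texp: "poly_tensor F \<Longrightarrow> poly_tensor (\<lambda>x. texp k (F x))"
  by (simp add: texp_fps_eval poly_tensor_fps_eval)

lemma poly_tensor_tlog: "poly_tensor F \<Longrightarrow> poly_tensor (\<lambda>x. tlog k (F x))"
  by (simp add: tlog_fps_eval poly_tensor_fps_eval poly_tensor_tsub poly_tensor_const)

lemma poly_tensor_tinv: "poly_tensor F \<Longrightarrow> poly_tensor (\<lambda>x. tinv k (F x))"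
  by (simp add: tinv_fps_eval poly_tensor_fps_eval poly_tensor_tsub poly_tensor_const)

lemma poly_tensor_log_residual: "(\<And>i. poly_tensor (\<lambda>x. xs x i)) \<Longrightarrow> poly_tensor M \<Longrightarrow> poly_tensor (\<lambda>x. log_residual k N (xs x) (M x))"
  unfolding log_residual_def by (rule poly_tensor_sum) (auto intro!: poly_tensor_tlog poly_tensor_tmul poly_tensor_tinv)

lemma poly_tensor_bary_iter: "(\<And>i. poly_tensor (\<lambda>x. xs x i)) \<Longrightarrow> poly_tensor (\<lambda>x. bary_iter k N (xs x) j)"
proof (induct j)
  case 0 then show ?case by (simp add: poly_tensor_const)
next
  case (Suc j)
  have "poly_tensor (\<lambda>x. log_residual k N (xs x) (texp k (bary_iter k N (xs x) j)))"
    by (rule poly_tensor_log_residual[OF Suc.prems poly_tensor_texp[OF Suc.hyps[OF Suc.prems]]])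
  then have "poly_tensor (\<lambda>x w. (1 / real N) * log_residual k N (xs x) (texp k (bary_iter k N (xs x) j)) w)"
    by (rule poly_tensor_scale)
  then show ?case using poly_tensor_add[OF Suc.hyps[OF Suc.prems]] by simp
qed

lemma poly_tensor_bary_solution: "(\<And>i. poly_tensor (\<lambda>x. xs x i)) \<Longrightarrow> poly_tensor (\<lambda>x. bary_solution k N (xs x))"
  unfolding bary_solution_def by (rule poly_tensor_texp) (rule poly_tensor_bary_iter)

lemma poly_tensor_id: "poly_tensor (\<lambda>x. x)"
  by (simp add: poly_tensor_def polyfun.var)

lemma poly_tensor_sample_comp: "poly_tensor (\<lambda>x. sample_comp x i)"
  by (simp add: poly_tensor_def sample_comp_def polyfun.var)

lemma poly_tensor_fun_upd: "poly_tensor (\<lambda>y. (xs(i0 := y)) i)"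
  by (cases "i = i0") (simp_all add: poly_tensor_id poly_tensor_const)

lemma alg_morphism_poly_tensor:
  assumes "poly_tensor F" and "\<And>x. x \<in> V \<Longrightarrow> f x = F x" and "\<And>x. x \<in> V \<Longrightarrow> f x \<in> W"
  shows "alg_morphism V W f"
  using assms by (auto simp: alg_morphism_def poly_tensor_def)

section \<open>The barycenter map\<close>

lemma sample_comp_grp: "x \<in> samples d k N \<Longrightarrow> i < N \<Longrightarrow> sample_comp x i \<in> grp d k"
  by (simp add: samples_def)

lemma sample_comp_sample_upd: "sample_comp (sample_upd x i y) = (sample_comp x)(i := y)"
  by (auto simp: sample_comp_def sample_upd_def fun_eq_iff)

lemma sample_upd_samples:
  assumes x: "x \<in> samples d k N" and i: "i < N" and y: "y \<in> grp d k"
  shows "sample_upd x i y \<in> samples d k N"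
  unfolding samples_def
proof (intro CollectI conjI allI impI)
  fix j assume "j < N"
  then show "sample_comp (sample_upd x i y) j \<in> grp d k"
    using sample_comp_grp[OF x] y by (simp add: sample_comp_sample_upd)
next
  fix j w assume "N \<le> j"
  then show "sample_upd x i y (j, w) = 0" using x i by (simp add: samples_def sample_upd_def)
qed

lemma bary_eq_bary_solution:
  assumes k: "1 \<le> k" and N: "1 \<le> N" and x: "x \<in> samples d k N"
  shows "bary d k N x = bary_solution k N (sample_comp x)"
  unfolding bary_def using the_bary_solution[OF k N sample_comp_grp[OF x]]
  by (simp add: log_residual_def)

lemma alg_morphism_bary:
  assumes k: "1 \<le> k" and N: "1 \<le> N"
  shows "alg_morphism (samples d k N) (grp d k) (bary d k N)"
proof (rule alg_morphism_poly_tensor[where F = "\<lambda>x. bary_solution k N (sample_comp x)"])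
  show "poly_tensor (\<lambda>x. bary_solution k N (sample_comp x))"
    by (intro poly_tensor_bary_solution poly_tensor_sample_comp)
  fix x assume x: "x \<in> samples d k N"
  then show "bary d k N x = bary_solution k N (sample_comp x)"
    by (rule bary_eq_bary_solution[OF k N])
  then show "bary d k N x \<in> grp d k"
    using bary_solution_grp_residual[OF k N sample_comp_grp[OF x]] by simp
qed

lemma bary_image:
  assumes k: "1 \<le> k" and N: "1 \<le> N"
  shows "bary d k N ` samples d k N = grp d k"
proof
  show "bary d k N ` samples d k N \<subseteq> grp d k"
    using alg_morphism_bary[OF k N] by (auto simp: alg_morphism_def)
  show "grp d k \<subseteq> bary d k N ` samples d k N"
  proof
    fix m assume m: "m \<in> grp d k"
    define x where "x = (\<lambda>(i, w). if i < N then m w else (0::real))"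
    have sc: "sample_comp x i = m" if "i < N" for i
      using that by (simp add: x_def sample_comp_def fun_eq_iff)
    have x: "x \<in> samples d k N"
      using m sc by (auto simp: samples_def x_def)
    have "log_residual k N (sample_comp x) m = tzero"
      using tmul_tinv(1)[OF k grp_Nil[OF m] grp_levels_le[OF m]] sc
      by (simp add: log_residual_def tlog_tone tzero_def)
    then have "bary d k N x = m"
      using bary_eq_bary_solution[OF k N x] bary_solution_iff[OF k N sample_comp_grp[OF x] m] by simp
    then show "m \<in> bary d k N ` samples d k N" using x by force
  qed
qed

definition log_residual_except :: "nat \<Rightarrow> nat \<Rightarrow> (nat \<Rightarrow> tensor) \<Rightarrow> nat \<Rightarrow> tensor \<Rightarrow> tensor" where
  "log_residual_except k N xs i0 m = (\<lambda>w. \<Sum>i\<in>{..<N} - {i0}. tlog k (tmul k (tinv k m) (xs i)) w)"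

text \<open>The value y of the sample at i0 that makes m the barycenter: log(m\<inverse> y) has to cancel
  the residuals of the other sample points.\<close>
definition bary_upd_inv :: "nat \<Rightarrow> nat \<Rightarrow> (nat \<Rightarrow> tensor) \<Rightarrow> nat \<Rightarrow> tensor \<Rightarrow> tensor" where
  "bary_upd_inv k N xs i0 m = tmul k m (texp k (tscale (-1) (log_residual_except k N xs i0 m)))"

lemma log_residual_fun_upd:
  assumes "i0 < N"
  shows "log_residual k N (xs(i0 := y)) m
    = (\<lambda>w. tlog k (tmul k (tinv k m) y) w + log_residual_except k N xs i0 m w)"
  unfolding log_residual_def log_residual_except_def using assms
  by (simp add: sum.remove[of "{..<N}" i0])

lemma log_residual_except_lie_alg:
  assumes k: "1 \<le> k" and xs: "\<And>i. i < N \<Longrightarrow> xs i \<in> grp d k" and m: "m \<in> grp d k"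
  shows "log_residual_except k N xs i0 m \<in> lie_alg d k"
  unfolding log_residual_except_def
  by (rule lie_alg_sum) (auto intro: tlog_tmul_tinv_lie_alg[OF k m] xs)

lemma bary_upd_inv_grp:
  assumes k: "1 \<le> k" and xs: "\<And>i. i < N \<Longrightarrow> xs i \<in> grp d k" and m: "m \<in> grp d k"
  shows "bary_upd_inv k N xs i0 m \<in> grp d k"
  unfolding bary_upd_inv_def
  by (rule tmul_grp[OF k m texp_grp[OF lie_alg.scale[OF log_residual_except_lie_alg[OF k xs m]]]])

lemma poly_tensor_bary_upd_inv: "poly_tensor (bary_upd_inv k N xs i0)"
proof -
  have "poly_tensor (log_residual_except k N xs i0)"
    unfolding log_residual_except_def
    by (rule poly_tensor_sum) (auto intro!: poly_tensor_tlog poly_tensor_tmul poly_tensor_tinv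
        poly_tensor_id poly_tensor_const)
  then have "poly_tensor (\<lambda>m. tscale (-1) (log_residual_except k N xs i0 m))"
    unfolding tscale_def by (rule poly_tensor_scale)
  then show ?thesis
    unfolding bary_upd_inv_def by (intro poly_tensor_tmul poly_tensor_id poly_tensor_texp)
qed

lemma bary_solution_fun_upd_iff:
  assumes k: "1 \<le> k" and N: "1 \<le> N" and i0: "i0 < N"
    and xs: "\<And>i. i < N \<Longrightarrow> xs i \<in> grp d k" and y: "y \<in> grp d k" and m: "m \<in> grp d k"
  shows "bary_solution k N (xs(i0 := y)) = m \<longleftrightarrow> bary_upd_inv k N xs i0 m = y"
proof -
  define S where "S = log_residual_except k N xs i0 m"
  have S: "tscale (-1) S \<in> lie_alg d k"
    unfolding S_def by (rule lie_alg.scale[OF log_residual_except_lie_alg[OF k xs m]])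
  have "bary_solution k N (xs(i0 := y)) = m \<longleftrightarrow> log_residual k N (xs(i0 := y)) m = tzero"
    by (rule bary_solution_iff[OF k N _ m]) (use xs y in auto)
  also have "\<dots> \<longleftrightarrow> tlog k (tmul k (tinv k m) y) = tscale (-1) S"
    by (auto simp: log_residual_fun_upd[OF i0] S_def fun_eq_iff tzero_def tscale_def
        add_eq_0_iff2)
  also have "\<dots> \<longleftrightarrow> tmul k (tinv k m) y = texp k (tscale (-1) S)"
    by (rule tlog_eq_iff_texp[OF k tmul_grp[OF k tinv_grp[OF k m] y] S])
  also have "\<dots> \<longleftrightarrow> y = bary_upd_inv k N xs i0 m"
    unfolding bary_upd_inv_def S_def[symmetric]
    by (rule tmul_tinv_eq_iff[OF k grp_Nil[OF m] grp_levels_le[OF m] grp_levels_le[OF y]]) (simp add: texp_fps_eval)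
  finally show ?thesis by auto
qed

lemma alg_iso_bary_sample_upd:
  assumes k: "1 \<le> k" and N: "1 \<le> N" and i0: "i0 < N" and x: "x \<in> samples d k N"
  shows "alg_iso (grp d k) (grp d k) (\<lambda>y. bary d k N (sample_upd x i0 y))"
proof -
  define xs where "xs = sample_comp x"
  have xs: "\<And>i. i < N \<Longrightarrow> xs i \<in> grp d k"
    unfolding xs_def using x by (rule sample_comp_grp)
  have bary_upd: "bary d k N (sample_upd x i0 y) = bary_solution k N (xs(i0 := y))"
    if "y \<in> grp d k" for y
    using bary_eq_bary_solution[OF k N sample_upd_samples[OF x i0 that]]
    by (simp add: xs_def sample_comp_sample_upd)
  have solution_grp: "bary_solution k N (xs(i0 := y)) \<in> grp d k" if "y \<in> grp d k" for y
    using bary_solution_grp_residual[OF k N, of "xs(i0 := y)"] xs that by simp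
  have inv_grp: "bary_upd_inv k N xs i0 m \<in> grp d k" if "m \<in> grp d k" for m
    by (rule bary_upd_inv_grp[OF k xs that])
  show ?thesis
    unfolding alg_iso_def
  proof (intro conjI exI[of _ "bary_upd_inv k N xs i0"] ballI)
    show "alg_morphism (grp d k) (grp d k) (\<lambda>y. bary d k N (sample_upd x i0 y))"
      by (rule alg_morphism_poly_tensor[where F = "\<lambda>y. bary_solution k N (xs(i0 := y))"])
        (use bary_upd solution_grp in \<open>auto intro: poly_tensor_bary_solution poly_tensor_fun_upd\<close>)
    show "alg_morphism (grp d k) (grp d k) (bary_upd_inv k N xs i0)"
      by (rule alg_morphism_poly_tensor) (auto intro: poly_tensor_bary_upd_inv inv_grp)
  next
    fix y assume y: "y \<in> grp d k"
    show "bary_upd_inv k N xs i0 (bary d k N (sample_upd x i0 y)) = y"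
      using bary_solution_fun_upd_iff[where xs = xs, OF k N i0 xs y solution_grp[OF y]] bary_upd[OF y] by simp
  next
    fix m assume m: "m \<in> grp d k"
    show "bary d k N (sample_upd x i0 (bary_upd_inv k N xs i0 m)) = m"
      using bary_solution_fun_upd_iff[where xs = xs, OF k N i0 xs inv_grp[OF m] m] bary_upd[OF inv_grp[OF m]]
      by simp
  qed
qed

theorem theorem4p7:
  fixes d k N :: nat
  assumes "1 \<le> d" and "1 \<le> k" and "1 \<le> N"
  shows "alg_morphism (samples d k N) (grp d k) (bary d k N)
         \<and> bary d k N ` samples d k N = grp d k
         \<and> (\<forall>i0<N. \<forall>x\<in>samples d k N.
               alg_iso (grp d k) (grp d k) (\<lambda>y. bary d k N (sample_upd x i0 y)))"
  using alg_morphism_bary[OF assms(2,3)] bary_image[OF assms(2,3)]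
    alg_iso_bary_sample_upd[OF assms(2,3)] by blast

end
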